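(* Let $\mathcal H$ be a separable complex Hilbert space and $S_2$ the Hilbert space of Hilbert–Schmidt operators on $\mathcal H$ with $\langle\eta,\tau\rangle_2=\operatorname{tr}(\eta^*\tau)$. If $A$ is a selfadjoint operator in $\mathcal B(S_2)$, then there exist selfadjoint operators $a_1,a_2,\ldots,b_1,b_2,\ldots\in\mathcal B(\mathcal H)$ such that $A\eta=\sum_n a_n\eta b_n$ for all $\eta\in S_2$. *)

theory Defs
  imports "HOL-Analysis.Analysis"
begin

class complex_vector = real_vector +
  fixes scaleC :: "complex \<Rightarrow> 'a \<Rightarrow> 'a"
  assumes scaleC_add_right: "scaleC c (x + y) = scaleC c x + scaleC c y"
    and scaleC_add_left: "scaleC (c + d) x = scaleC c x + scaleC d x"
    and scaleC_scaleC: "scaleC c (scaleC d x) = scaleC (c * d) x"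
    and scaleC_one: "scaleC 1 x = x"
    and scaleR_scaleC: "scaleR r x = scaleC (complex_of_real r) x"

class complex_inner = complex_vector + real_normed_vector +
  fixes cinner :: "'a \<Rightarrow> 'a \<Rightarrow> complex"
  assumes cinner_commute: "cinner x y = cnj (cinner y x)"
    and cinner_add_left: "cinner (x + y) z = cinner x z + cinner y z"
    and cinner_scaleC_left: "cinner (scaleC c x) y = cnj c * cinner x y"
    and cinner_Re_nonneg: "0 \<le> Re (cinner x x)"
    and cinner_eq_zero_iff: "cinner x x = 0 \<longleftrightarrow> x = 0"
    and norm_eq_sqrt_cinner: "norm x = sqrt (Re (cinner x x))"

class chilbert_space = complex_inner + complete_space

definition separable_space :: "'a::topological_space itself \<Rightarrow> bool" where
  "separable_space _ \<longleftrightarrow> (\<exists>D::'a set. countable D \<and> closure D = UNIV)"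

definition bounded_clinear_op :: "('a::complex_inner \<Rightarrow> 'a) \<Rightarrow> bool" where
  "bounded_clinear_op f \<longleftrightarrow>
     (\<forall>x y. f (x + y) = f x + f y) \<and> (\<forall>c x. f (scaleC c x) = scaleC c (f x)) \<and>
     (\<exists>K. \<forall>x. norm (f x) \<le> K * norm x)"

definition selfadjoint_op :: "('a::complex_inner \<Rightarrow> 'a) \<Rightarrow> bool" where
  "selfadjoint_op f \<longleftrightarrow> bounded_clinear_op f \<and> (\<forall>x y. cinner (f x) y = cinner x (f y))"

definition orthonormal_basis :: "'a::complex_inner set \<Rightarrow> bool" where
  "orthonormal_basis E \<longleftrightarrow>
     (\<forall>e\<in>E. cinner e e = 1) \<and> (\<forall>e\<in>E. \<forall>f\<in>E. e \<noteq> f \<longrightarrow> cinner e f = 0) \<and>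
     (\<forall>x. (\<forall>e\<in>E. cinner e x = 0) \<longrightarrow> x = 0)"

definition hilbert_schmidt :: "('a::complex_inner \<Rightarrow> 'a) \<Rightarrow> bool" where
  "hilbert_schmidt \<eta> \<longleftrightarrow> bounded_clinear_op \<eta> \<and>
     (\<exists>E. orthonormal_basis E \<and> (\<lambda>e. (norm (\<eta> e))\<^sup>2) summable_on E)"

definition S2 :: "('a::complex_inner \<Rightarrow> 'a) set" where
  "S2 = {\<eta>. hilbert_schmidt \<eta>}"

text \<open>\<open>\<langle>\<eta>,\<tau>\<rangle>\<^sub>2 = tr(\<eta>\<^sup>*\<tau>) = \<Sum>\<^sub>e \<langle>e, \<eta>\<^sup>*\<tau> e\<rangle> = \<Sum>\<^sub>e \<langle>\<eta> e, \<tau> e\<rangle>\<close>, computed in a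
  (fixed, arbitrarily chosen) orthonormal basis.\<close>
definition hs_inner :: "('a::complex_inner \<Rightarrow> 'a) \<Rightarrow> ('a \<Rightarrow> 'a) \<Rightarrow> complex" where
  "hs_inner \<eta> \<tau> = (\<Sum>\<^sub>\<infinity>e\<in>(SOME E. orthonormal_basis E). cinner (\<eta> e) (\<tau> e))"

definition hs_norm :: "('a::complex_inner \<Rightarrow> 'a) \<Rightarrow> real" where
  "hs_norm \<eta> = sqrt (Re (hs_inner \<eta> \<eta>))"

definition selfadjoint_on_S2 :: "(('a::complex_inner \<Rightarrow> 'a) \<Rightarrow> ('a \<Rightarrow> 'a)) \<Rightarrow> bool" where
  "selfadjoint_on_S2 A \<longleftrightarrow>
     (\<forall>\<eta>\<in>S2. A \<eta> \<in> S2) \<and>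
     (\<forall>\<eta>\<in>S2. \<forall>\<tau>\<in>S2. A (\<lambda>x. \<eta> x + \<tau> x) = (\<lambda>x. A \<eta> x + A \<tau> x)) \<and>
     (\<forall>c. \<forall>\<eta>\<in>S2. A (\<lambda>x. scaleC c (\<eta> x)) = (\<lambda>x. scaleC c (A \<eta> x))) \<and>
     (\<exists>K. \<forall>\<eta>\<in>S2. hs_norm (A \<eta>) \<le> K * hs_norm \<eta>) \<and>
     (\<forall>\<eta>\<in>S2. \<forall>\<tau>\<in>S2. hs_inner (A \<eta>) \<tau> = hs_inner \<eta> (A \<tau>))"

end

theory Submission
  imports Defs
begin

lemma scaleC_zero_right [simp]: "scaleC c (0::'a::complex_vector) = 0"
  using scaleC_add_right[of c 0 0] by simp

lemma scaleC_zero_left [simp]: "scaleC 0 (x::'a::complex_vector) = 0"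
  using scaleR_scaleC[of 0 x] by simp

lemma scaleC_minus_left: "scaleC (- c) x = - scaleC c (x::'a::complex_vector)"
  using scaleC_add_left[of "- c" c x] by (simp add: eq_neg_iff_add_eq_0)

lemma scaleC_minus_right: "scaleC c (- x) = - scaleC c (x::'a::complex_vector)"
  using scaleC_add_right[of c "- x" x] by (simp add: eq_neg_iff_add_eq_0)

lemma scaleC_sum_right: "scaleC c (sum f A) = (\<Sum>a\<in>A. scaleC c (f a :: 'a::complex_vector))"
  by (induction A rule: infinite_finite_induct) (auto simp: scaleC_add_right)

lemma scaleC_sum_left: "scaleC (sum f A) (x::'a::complex_vector) = (\<Sum>a\<in>A. scaleC (f a) x)"
  by (induction A rule: infinite_finite_induct) (auto simp: scaleC_add_left)

lemma cinner_add_right: "cinner (x::'a::complex_inner) (y + z) = cinner x y + cinner x z"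
  by (metis cinner_add_left cinner_commute complex_cnj_add)

lemma cinner_scaleC_right: "cinner (x::'a::complex_inner) (scaleC c y) = c * cinner x y"
  by (metis cinner_commute cinner_scaleC_left complex_cnj_cnj complex_cnj_mult)

lemma cinner_zero_left [simp]: "cinner (0::'a::complex_inner) y = 0"
  using cinner_add_left[of 0 0 y] by simp

lemma cinner_zero_right [simp]: "cinner (x::'a::complex_inner) 0 = 0"
  by (metis cinner_commute cinner_zero_left complex_cnj_zero)

lemma cinner_minus_left: "cinner (- x) y = - cinner (x::'a::complex_inner) y"
  using cinner_add_left[of "- x" x y] by (simp add: add_eq_0_iff)

lemma cinner_minus_right: "cinner (x::'a::complex_inner) (- y) = - cinner x y"
  by (metis cinner_commute cinner_minus_left complex_cnj_minus)

lemma cinner_diff_left: "cinner (x - y) z = cinner x z - cinner (y::'a::complex_inner) z"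
  using cinner_add_left[of x "- y" z] by (simp add: cinner_minus_left)

lemma cinner_diff_right: "cinner (x::'a::complex_inner) (y - z) = cinner x y - cinner x z"
  using cinner_add_right[of x y "- z"] by (simp add: cinner_minus_right)

lemma cinner_sum_left: "cinner (sum f A) (y::'a::complex_inner) = (\<Sum>a\<in>A. cinner (f a) y)"
  by (induction A rule: infinite_finite_induct) (auto simp: cinner_add_left)

lemma cinner_sum_right: "cinner (x::'a::complex_inner) (sum f A) = (\<Sum>a\<in>A. cinner x (f a))"
  by (induction A rule: infinite_finite_induct) (auto simp: cinner_add_right)

lemma cnj_mult_self: "cnj z * z = of_real ((cmod z)\<^sup>2)"
  unfolding complex_norm_square by (rule mult.commute)

lemma cinner_self_eq_norm_power2: "cinner x x = of_real ((norm (x::'a::complex_inner))\<^sup>2)"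
proof -
  have "Im (cinner x x) = Im (cnj (cinner x x))"
    using cinner_commute[of x x] by (rule arg_cong)
  then have "Im (cinner x x) = 0"
    by simp
  moreover have "Re (cinner x x) = (norm x)\<^sup>2"
    using norm_eq_sqrt_cinner[of x] cinner_Re_nonneg[of x] by simp
  ultimately show ?thesis by (simp add: complex_eq_iff)
qed

lemma power2_norm_eq_cinner: "(norm x)\<^sup>2 = Re (cinner x (x::'a::complex_inner))"
  by (simp add: cinner_self_eq_norm_power2)

lemma norm_scaleC [simp]: "norm (scaleC c x) = cmod c * norm (x::'a::complex_inner)"
proof -
  have "cinner (scaleC c x) (scaleC c x) = (cnj c * c) * cinner x x"
    by (simp add: cinner_scaleC_left cinner_scaleC_right mult.assoc)
  then have "(norm (scaleC c x))\<^sup>2 = Re ((cnj c * c) * cinner x x)"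
    by (simp add: power2_norm_eq_cinner)
  also have "\<dots> = (cmod c * norm x)\<^sup>2"
    unfolding cnj_mult_self cinner_self_eq_norm_power2 by (simp add: power_mult_distrib)
  finally show ?thesis by (simp add: power2_eq_iff_nonneg)
qed

lemma cnj_cinner [simp]: "cnj (cinner x y) = cinner y (x::'a::complex_inner)"
  by (metis cinner_commute)

lemma cmod_cinner_commute: "cmod (cinner x y) = cmod (cinner y (x::'a::complex_inner))"
  by (metis cnj_cinner complex_mod_cnj)

lemma complex_cauchy_schwarz: "cmod (cinner x y) \<le> norm x * norm (y::'a::complex_inner)"
proof (cases "y = 0")
  case True
  then show ?thesis by simp
next
  case False
  then have ny: "norm y > 0" by simp
  define t where "t = cinner y x / of_real ((norm y)\<^sup>2)"
  define z where "z = x - scaleC t y"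
  \<comment> \<open>\<open>z\<close> is the component of \<open>x\<close> orthogonal to \<open>y\<close>\<close>
  have "cinner z z = cinner x x - t * cinner x y - cnj t * cinner y x + cnj t * t * cinner y y"
    unfolding z_def
    by (simp add: cinner_diff_left cinner_diff_right cinner_scaleC_left cinner_scaleC_right algebra_simps)
  also have "cnj t * t * cinner y y = cnj t * cinner y x"
    using ny by (simp add: t_def cinner_self_eq_norm_power2 power2_eq_square)
  also have "t * cinner x y = of_real ((cmod (cinner x y))\<^sup>2 / (norm y)\<^sup>2)"
    unfolding t_def by (simp add: cnj_mult_self[of "cinner x y", simplified])
  finally have "Re (cinner z z) = (norm x)\<^sup>2 - (cmod (cinner x y))\<^sup>2 / (norm y)\<^sup>2"
    by (simp add: power2_norm_eq_cinner)
  then have "(cmod (cinner x y))\<^sup>2 \<le> (norm x)\<^sup>2 * (norm y)\<^sup>2"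
    using cinner_Re_nonneg[of z] ny by (simp add: field_simps)
      (smt (verit) mult_nonneg_nonneg zero_le_power2)
  then have "(cmod (cinner x y))\<^sup>2 \<le> (norm x * norm y)\<^sup>2"
    by (simp add: power_mult_distrib)
  then show ?thesis
    by (meson abs_le_square_iff abs_of_nonneg mult_nonneg_nonneg norm_ge_zero power2_le_imp_le)
qed

lemma bounded_linear_cinner_right: "bounded_linear (cinner (x::'a::complex_inner))"
proof
  show "cinner x (a + b) = cinner x a + cinner x b" for a b
    by (rule cinner_add_right)
  show "cinner x (scaleR r a) = scaleR r (cinner x a)" for r a
    by (simp add: scaleR_scaleC cinner_scaleC_right scaleR_conv_of_real)
  show "\<exists>K. \<forall>a. norm (cinner x a) \<le> norm a * K"
    using complex_cauchy_schwarz[of x] by (metis mult.commute)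
qed

section \<open>Orthonormal bases\<close>

definition orthonormal_set :: "'a::complex_inner set \<Rightarrow> bool" where
  "orthonormal_set E \<longleftrightarrow> (\<forall>e\<in>E. cinner e e = 1) \<and> (\<forall>e\<in>E. \<forall>f\<in>E. e \<noteq> f \<longrightarrow> cinner e f = 0)"

lemma orthonormal_set_Union_chain:
  assumes "C \<in> chains (Collect orthonormal_set)"
  shows "orthonormal_set (\<Union>C)"
proof -
  have sub: "\<And>X. X \<in> C \<Longrightarrow> orthonormal_set X"
    and chain: "\<And>X Y. X \<in> C \<Longrightarrow> Y \<in> C \<Longrightarrow> X \<subseteq> Y \<or> Y \<subseteq> X"
    using assms unfolding chains_def chain_subset_def by auto
  show ?thesis
    unfolding orthonormal_set_def
  proof (intro conjI ballI impI)
    fix e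
    assume "e \<in> \<Union>C"
    then obtain X where "X \<in> C" "e \<in> X"
      by blast
    then show "cinner e e = 1"
      using sub[of X] unfolding orthonormal_set_def by blast
  next
    fix e f
    assume "e \<in> \<Union>C" "f \<in> \<Union>C" "e \<noteq> f"
    then obtain X Y where "X \<in> C" "Y \<in> C" "e \<in> X" "f \<in> Y"
      by blast
    then obtain Z where "Z \<in> C" "e \<in> Z" "f \<in> Z"
      using chain[of X Y] by blast
    then show "cinner e f = 0"
      using sub[of Z] \<open>e \<noteq> f\<close> unfolding orthonormal_set_def by blast
  qed
qed

lemma maximal_orthonormal_set_basis:
  assumes "orthonormal_set E" and maximal: "\<And>X. orthonormal_set X \<Longrightarrow> E \<subseteq> X \<Longrightarrow> X = E"
  shows "orthonormal_basis E"
proof -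
  have complete: "x = 0" if orth: "\<forall>e\<in>E. cinner e x = 0" for x
  proof (rule ccontr)
    assume "x \<noteq> 0"
    define u where "u = scaleC (of_real (1 / norm x)) x"
    have "cinner u u = of_real (1 / norm x) * (cnj (of_real (1 / norm x)) * cinner x x)"
      by (simp only: u_def cinner_scaleC_left cinner_scaleC_right)
    then have uu: "cinner u u = 1"
      using \<open>x \<noteq> 0\<close> by (simp add: cinner_self_eq_norm_power2 power2_eq_square)
    have eu: "cinner e u = 0" "cinner u e = 0" if "e \<in> E" for e
    proof -
      show "cinner e u = 0"
        using orth that by (simp add: u_def cinner_scaleC_right)
      then show "cinner u e = 0"
        by (metis cnj_cinner complex_cnj_zero)
    qed
    have "u \<notin> E"
    proof
      assume "u \<in> E"
      with eu(1)[of u] uu show False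
        by simp
    qed
    moreover have "orthonormal_set (insert u E)"
      using \<open>orthonormal_set E\<close> uu eu unfolding orthonormal_set_def by (simp add: ball_simps)
    ultimately show False
      using maximal[of "insert u E"] by blast
  qed
  show ?thesis
    unfolding orthonormal_basis_def
    using \<open>orthonormal_set E\<close> complete unfolding orthonormal_set_def by (intro conjI) blast+
qed

lemma orthonormal_basis_exists: "\<exists>E::'a::complex_inner set. orthonormal_basis E"
proof -
  obtain E :: "'a set" where "orthonormal_set E" "\<And>X. orthonormal_set X \<Longrightarrow> E \<subseteq> X \<Longrightarrow> X = E"
    using Zorn_Lemma[of "Collect orthonormal_set"] orthonormal_set_Union_chain by auto
  then show ?thesis
    using maximal_orthonormal_set_basis by blast
qed

lemma onb_cinner:
  assumes "orthonormal_basis E" "e \<in> E" "f \<in> E"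
  shows "cinner e f = (if e = f then 1 else 0)"
  using assms unfolding orthonormal_basis_def by auto

lemma onb_eq_zeroI:
  assumes "orthonormal_basis E" "\<And>e. e \<in> E \<Longrightarrow> cinner e x = 0"
  shows "x = 0"
  using assms unfolding orthonormal_basis_def by auto

lemma onb_norm:
  assumes "orthonormal_basis E" "e \<in> E"
  shows "norm (e::'a::complex_inner) = 1"
  using onb_cinner[OF assms assms(2)] power2_norm_eq_cinner[of e] norm_ge_zero[of e]
  by (auto simp: power2_eq_1_iff)

lemma cinner_onb_combination:
  fixes E :: "'a::complex_inner set"
  assumes "orthonormal_basis E" "finite F" "F \<subseteq> E" "f \<in> E"
  shows "cinner f (\<Sum>e\<in>F. scaleC (c e) e) = (if f \<in> F then c f else 0)"
proof -
  have "cinner f (\<Sum>e\<in>F. scaleC (c e) e) = (\<Sum>e\<in>F. c e * cinner f e)"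
    by (simp add: cinner_sum_right cinner_scaleC_right)
  also have "\<dots> = (\<Sum>e\<in>F. if e = f then c e else 0)"
    using assms by (intro sum.cong) (auto simp: onb_cinner)
  finally show ?thesis
    using assms(2) by (simp add: sum.delta')
qed

lemma norm_onb_combination:
  fixes E :: "'a::complex_inner set"
  assumes "orthonormal_basis E" "finite F" "F \<subseteq> E"
  shows "(norm (\<Sum>e\<in>F. scaleC (c e) e))\<^sup>2 = (\<Sum>e\<in>F. (cmod (c e))\<^sup>2)"
proof -
  have "cinner (\<Sum>e\<in>F. scaleC (c e) e) (\<Sum>e\<in>F. scaleC (c e) e) = (\<Sum>f\<in>F. cnj (c f) * c f)"
    using assms cinner_onb_combination[OF assms]
    by (auto simp: cinner_sum_left cinner_scaleC_left simp del: cnj_cinner intro!: sum.cong)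
  then show ?thesis
    by (simp add: power2_norm_eq_cinner cnj_mult_self)
qed

lemma bessel_inequality:
  fixes E :: "'a::complex_inner set"
  assumes "orthonormal_basis E" "finite F" "F \<subseteq> E"
  shows "(\<Sum>e\<in>F. (cmod (cinner e x))\<^sup>2) \<le> (norm x)\<^sup>2"
proof -
  define p where "p = (\<Sum>e\<in>F. scaleC (cinner e x) e)"
  define S where "S = (\<Sum>e\<in>F. (cmod (cinner e x))\<^sup>2)"
  have px: "cinner p x = of_real S"
  proof -
    have "cinner p x = (\<Sum>e\<in>F. cnj (cinner e x) * cinner e x)"
      unfolding p_def by (simp add: cinner_sum_left cinner_scaleC_left del: cnj_cinner)
    then show ?thesis
      unfolding S_def by (simp only: cnj_mult_self of_real_sum)
  qed
  have pp: "cinner p p = of_real S"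
    using norm_onb_combination[OF assms, of "\<lambda>e. cinner e x"]
    unfolding p_def S_def by (simp add: cinner_self_eq_norm_power2)
  have "cinner (x - p) (x - p) = cinner x x - of_real S"
    using px pp cinner_commute[of x p] by (simp add: cinner_diff_left cinner_diff_right)
  then show ?thesis
    using cinner_Re_nonneg[of "x - p"] unfolding S_def by (simp add: power2_norm_eq_cinner)
qed

lemma orthonormal_basis_countable:
  fixes E :: "'a::complex_inner set"
  assumes "separable_space TYPE('a)" "orthonormal_basis E"
  shows "countable E"
proof -
  obtain D :: "'a set" where D: "countable D" "closure D = UNIV"
    using assms(1) unfolding separable_space_def by blast
  have "\<exists>d\<in>D. dist d e < 1/2" for e
    using D(2) closure_approachable[of e D] by (metis UNIV_I half_gt_zero zero_less_one)
  then obtain g where g: "\<And>e. g e \<in> D" "\<And>e. dist (g e) e < 1/2"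
    by metis
  \<comment> \<open>distinct basis vectors are at distance \<open>sqrt 2\<close>, so \<open>g\<close> is injective on \<open>E\<close>\<close>
  have "e = f" if "e \<in> E" "f \<in> E" "g e = g f" for e f
  proof (rule ccontr)
    assume "e \<noteq> f"
    have "cinner (e - f) (e - f) = 2"
      using onb_cinner[OF assms(2)] that \<open>e \<noteq> f\<close> by (simp add: cinner_diff_left cinner_diff_right)
    then have "(norm (e - f))\<^sup>2 = 2"
      by (simp add: power2_norm_eq_cinner)
    moreover have "norm (e - f) < 1"
    proof -
      have "e - f = (g f - f) - (g e - e)"
        using \<open>g e = g f\<close> by (simp add: algebra_simps)
      then have "norm (e - f) \<le> norm (g f - f) + norm (g e - e)"
        by (metis norm_triangle_ineq4)
      then show ?thesis
        using g(2)[of e] g(2)[of f] by (simp add: dist_norm)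
    qed
    ultimately show False
      by (smt (verit) norm_ge_zero power_le_one)
  qed
  then have "inj_on g E"
    by (rule inj_onI)
  moreover have "countable (g ` E)"
    using g(1) by (intro countable_subset[OF _ D(1)]) auto
  ultimately show ?thesis
    using countable_image_inj_on by blast
qed

definition basis_prefix :: "'a set \<Rightarrow> nat \<Rightarrow> 'a set" where
  "basis_prefix E N = from_nat_into E ` {..<N} \<inter> E"

lemma finite_basis_prefix [simp]: "finite (basis_prefix E N)"
  unfolding basis_prefix_def by simp

lemma basis_prefix_subset: "basis_prefix E N \<subseteq> E"
  unfolding basis_prefix_def by simp

lemma basis_prefix_mono: "N \<le> M \<Longrightarrow> basis_prefix E N \<subseteq> basis_prefix E M"
  unfolding basis_prefix_def by auto

lemma eventually_in_basis_prefix: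
  assumes "countable E" "e \<in> E"
  shows "eventually (\<lambda>N. e \<in> basis_prefix E N) sequentially"
proof -
  have "e \<in> basis_prefix E N" if "N > to_nat_on E e" for N
    using that from_nat_into_to_nat_on[OF assms] assms(2) unfolding basis_prefix_def
    by (metis IntI image_eqI lessThan_iff)
  then show ?thesis
    unfolding eventually_sequentially by (intro exI[of _ "Suc (to_nat_on E e)"]) auto
qed

lemma filterlim_basis_prefix:
  assumes "countable E"
  shows "filterlim (basis_prefix E) (finite_subsets_at_top E) sequentially"
  unfolding filterlim_def le_filter_def eventually_filtermap
proof (intro allI impI)
  fix P
  assume "eventually P (finite_subsets_at_top E)"
  then obtain X where X: "finite X" "X \<subseteq> E"
    and P: "\<forall>Y. finite Y \<and> X \<subseteq> Y \<and> Y \<subseteq> E \<longrightarrow> P Y"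
    unfolding eventually_finite_subsets_at_top by blast
  have "eventually (\<lambda>N. \<forall>e\<in>X. e \<in> basis_prefix E N) sequentially"
    using X(2) by (intro eventually_ball_finite[OF X(1)] ballI eventually_in_basis_prefix[OF assms]) auto
  then show "eventually (\<lambda>N. P (basis_prefix E N)) sequentially"
  proof (rule eventually_mono)
    show "P (basis_prefix E N)" if "\<forall>e\<in>X. e \<in> basis_prefix E N" for N
      using that P finite_basis_prefix[of E N] basis_prefix_subset[of E N] by (simp add: subset_iff)
  qed
qed

lemma has_sum_basis_prefix:
  assumes "countable E" "(f has_sum s) E"
  shows "(\<lambda>N. sum f (basis_prefix E N)) \<longlonglongrightarrow> s"
  using filterlim_compose[OF assms(2)[unfolded has_sum_def] filterlim_basis_prefix[OF assms(1)]]
  by (simp add: o_def)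

lemma norm_diff_onb_partial_sums:
  fixes E :: "'a::complex_inner set"
  assumes "orthonormal_basis E" "N \<le> M"
  shows "(norm ((\<Sum>e\<in>basis_prefix E M. scaleC (c e) e) - (\<Sum>e\<in>basis_prefix E N. scaleC (c e) e)))\<^sup>2
    = (\<Sum>e\<in>basis_prefix E M. (cmod (c e))\<^sup>2) - (\<Sum>e\<in>basis_prefix E N. (cmod (c e))\<^sup>2)"
proof -
  have sub: "basis_prefix E N \<subseteq> basis_prefix E M"
    using basis_prefix_mono[OF assms(2)] .
  then show ?thesis
    using norm_onb_combination[OF assms(1), of "basis_prefix E M - basis_prefix E N" c]
      basis_prefix_subset[of E M]
    by (auto simp: sum_diff)
qed

lemma Cauchy_onb_partial_sums:
  fixes E :: "'a::complex_inner set"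
  assumes onb: "orthonormal_basis E" and "countable E"
    and sum: "((\<lambda>e. (cmod (c e))\<^sup>2) has_sum s) E"
  shows "Cauchy (\<lambda>N. \<Sum>e\<in>basis_prefix E N. scaleC (c e) e)"
proof (rule metric_CauchyI)
  fix \<epsilon> :: real
  assume "\<epsilon> > 0"
  define a where "a N = (\<Sum>e\<in>basis_prefix E N. (cmod (c e))\<^sup>2)" for N
  have "a \<longlonglongrightarrow> s"
    unfolding a_def by (rule has_sum_basis_prefix[OF \<open>countable E\<close> sum])
  then have "Cauchy a"
    by (rule LIMSEQ_imp_Cauchy)
  then obtain M where M: "\<And>m n. m \<ge> M \<Longrightarrow> n \<ge> M \<Longrightarrow> dist (a m) (a n) < \<epsilon>\<^sup>2"
    using \<open>\<epsilon> > 0\<close> unfolding Cauchy_def by (metis zero_less_power)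
  have "dist (\<Sum>e\<in>basis_prefix E m. scaleC (c e) e) (\<Sum>e\<in>basis_prefix E n. scaleC (c e) e) < \<epsilon>"
    if "m \<ge> M" "n \<ge> M" for m n
  proof -
    have "(dist (\<Sum>e\<in>basis_prefix E m. scaleC (c e) e) (\<Sum>e\<in>basis_prefix E n. scaleC (c e) e))\<^sup>2
        = \<bar>a m - a n\<bar>"
    proof (cases "n \<le> m")
      case True
      note eq = norm_diff_onb_partial_sums[OF onb True, of c]
      have "0 \<le> a m - a n"
        unfolding a_def by (subst eq[symmetric]) simp
      then show ?thesis
        using eq unfolding a_def dist_norm by simp
    next
      case False
      then have "m \<le> n"
        by simp
      note eq = norm_diff_onb_partial_sums[OF onb this, of c]
      have "0 \<le> a n - a m"
        unfolding a_def by (subst eq[symmetric]) simp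
      then show ?thesis
        using eq unfolding a_def dist_norm by (simp add: norm_minus_commute)
    qed
    then have "(dist (\<Sum>e\<in>basis_prefix E m. scaleC (c e) e) (\<Sum>e\<in>basis_prefix E n. scaleC (c e) e))\<^sup>2 < \<epsilon>\<^sup>2"
      using M[OF that] by (simp add: dist_real_def)
    then show ?thesis
      using \<open>\<epsilon> > 0\<close> by (rule power_less_imp_less_base[OF _ less_imp_le])
  qed
  then show "\<exists>M. \<forall>m\<ge>M. \<forall>n\<ge>M. dist (\<Sum>e\<in>basis_prefix E m. scaleC (c e) e) (\<Sum>e\<in>basis_prefix E n. scaleC (c e) e) < \<epsilon>"
    by blast
qed

lemma onb_series_converges:
  fixes E :: "'a::chilbert_space set"
  assumes onb: "orthonormal_basis E" and "countable E"
    and sum: "((\<lambda>e. (cmod (c e))\<^sup>2) has_sum s) E"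
  obtains v where "(\<lambda>N. \<Sum>e\<in>basis_prefix E N. scaleC (c e) e) \<longlonglongrightarrow> v"
    and "\<And>e. e \<in> E \<Longrightarrow> cinner e v = c e" and "(norm v)\<^sup>2 = s"
proof -
  define y where "y N = (\<Sum>e\<in>basis_prefix E N. scaleC (c e) e)" for N
  obtain v where lim: "y \<longlonglongrightarrow> v"
    using Cauchy_onb_partial_sums[OF assms] Cauchy_convergent_iff convergent_def unfolding y_def by blast
  have "cinner e v = c e" if "e \<in> E" for e
  proof -
    have "eventually (\<lambda>N. cinner e (y N) = c e) sequentially"
      using eventually_in_basis_prefix[OF \<open>countable E\<close> that]
      by eventually_elim
        (use cinner_onb_combination[OF onb finite_basis_prefix basis_prefix_subset that] in
          \<open>simp add: y_def\<close>)
    then have "(\<lambda>N. cinner e (y N)) \<longlonglongrightarrow> c e"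
      by (rule tendsto_eventually)
    then show ?thesis
      using bounded_linear.tendsto[OF bounded_linear_cinner_right lim] LIMSEQ_unique by blast
  qed
  moreover have "(\<lambda>N. (norm (y N))\<^sup>2) \<longlonglongrightarrow> s"
    unfolding y_def norm_onb_combination[OF onb finite_basis_prefix basis_prefix_subset]
    by (rule has_sum_basis_prefix[OF \<open>countable E\<close> sum])
  then have "(norm v)\<^sup>2 = s"
    using tendsto_power[OF tendsto_norm[OF lim], of 2] LIMSEQ_unique by blast
  ultimately show ?thesis
    using that lim unfolding y_def by blast
qed

lemma onb_expansion:
  fixes E :: "'a::chilbert_space set"
  assumes onb: "orthonormal_basis E" and "countable E"
  shows "(\<lambda>N. \<Sum>e\<in>basis_prefix E N. scaleC (cinner e x) e) \<longlonglongrightarrow> x"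
    and parseval: "((\<lambda>e. (cmod (cinner e x))\<^sup>2) has_sum (norm x)\<^sup>2) E"
proof -
  have "bdd_above (sum (\<lambda>e. (cmod (cinner e x))\<^sup>2) ` {F. F \<subseteq> E \<and> finite F})"
    using bessel_inequality[OF onb] by (auto intro!: bdd_aboveI)
  then have summable: "(\<lambda>e. (cmod (cinner e x))\<^sup>2) summable_on E"
    by (intro nonneg_bdd_above_summable_on) (simp_all add: conj_commute)
  obtain v where v: "(\<lambda>N. \<Sum>e\<in>basis_prefix E N. scaleC (cinner e x) e) \<longlonglongrightarrow> v"
    "\<And>e. e \<in> E \<Longrightarrow> cinner e v = cinner e x"
    "(norm v)\<^sup>2 = infsum (\<lambda>e. (cmod (cinner e x))\<^sup>2) E"
    using onb_series_converges[OF onb \<open>countable E\<close> summable[unfolded summable_iff_has_sum_infsum]] by blast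
  have "x = v"
    using onb_eq_zeroI[OF onb, of "x - v"] v(2) by (simp add: cinner_diff_right)
  then show "(\<lambda>N. \<Sum>e\<in>basis_prefix E N. scaleC (cinner e x) e) \<longlonglongrightarrow> x"
    and "((\<lambda>e. (cmod (cinner e x))\<^sup>2) has_sum (norm x)\<^sup>2) E"
    using v summable by (simp_all add: summable_iff_has_sum_infsum)
qed

lemma bounded_clinear_op_add: "bounded_clinear_op f \<Longrightarrow> f (x + y) = f x + f y"
  unfolding bounded_clinear_op_def by blast

lemma bounded_clinear_op_scaleC: "bounded_clinear_op f \<Longrightarrow> f (scaleC c x) = scaleC c (f x)"
  unfolding bounded_clinear_op_def by blast

lemma bounded_clinear_op_zero: "bounded_clinear_op f \<Longrightarrow> f 0 = 0"
  using bounded_clinear_op_scaleC[of f 0 0] by simp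

lemma bounded_clinear_op_bounded_linear:
  assumes "bounded_clinear_op (f :: 'a::complex_inner \<Rightarrow> 'a)"
  shows "bounded_linear f"
proof
  show "f (x + y) = f x + f y" for x y
    using bounded_clinear_op_add[OF assms] .
  show "f (scaleR r x) = scaleR r (f x)" for r x
    using bounded_clinear_op_scaleC[OF assms] by (simp add: scaleR_scaleC)
  obtain K where "\<forall>x. norm (f x) \<le> K * norm x"
    using assms unfolding bounded_clinear_op_def by blast
  then show "\<exists>K. \<forall>x. norm (f x) \<le> norm x * K"
    by (metis mult.commute)
qed

lemma bounded_clinear_op_sum:
  assumes "bounded_clinear_op (f :: 'a::complex_inner \<Rightarrow> 'a)"
  shows "f (\<Sum>g\<in>F. scaleC (c g) (u g)) = (\<Sum>g\<in>F. scaleC (c g) (f (u g)))"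
proof -
  interpret bounded_linear f
    by (rule bounded_clinear_op_bounded_linear[OF assms])
  show ?thesis
    by (simp add: sum bounded_clinear_op_scaleC[OF assms])
qed

lemma bounded_clinear_op_plus:
  assumes "bounded_clinear_op (f::'a::complex_inner \<Rightarrow> 'a)" "bounded_clinear_op g"
  shows "bounded_clinear_op (\<lambda>x. f x + g x)"
proof -
  obtain K1 K2 where "\<forall>x. norm (f x) \<le> K1 * norm x" "\<forall>x. norm (g x) \<le> K2 * norm x"
    using assms unfolding bounded_clinear_op_def by blast
  then have "norm (f x + g x) \<le> (K1 + K2) * norm x" for x
    using norm_triangle_ineq[of "f x" "g x"] by (smt (verit) distrib_right)
  then show ?thesis
    using assms unfolding bounded_clinear_op_def by (auto simp: scaleC_add_right)
qed

lemma bounded_clinear_op_scaleC_left: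
  assumes "bounded_clinear_op (f::'a::complex_inner \<Rightarrow> 'a)"
  shows "bounded_clinear_op (\<lambda>x. scaleC c (f x))"
proof -
  obtain K where K: "\<forall>x. norm (f x) \<le> K * norm x"
    using assms unfolding bounded_clinear_op_def by blast
  show ?thesis
    unfolding bounded_clinear_op_def
  proof (intro conjI allI exI)
    show "scaleC c (f (x + y)) = scaleC c (f x) + scaleC c (f y)" for x y
      using bounded_clinear_op_add[OF assms] by (simp add: scaleC_add_right)
    show "scaleC c (f (scaleC d x)) = scaleC d (scaleC c (f x))" for d x
      using bounded_clinear_op_scaleC[OF assms] by (simp add: scaleC_scaleC mult.commute)
    show "norm (scaleC c (f x)) \<le> (cmod c * K) * norm x" for x
      using K by (simp add: mult.assoc mult_left_mono)
  qed
qed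

lemma bounded_clinear_op_0: "bounded_clinear_op (\<lambda>x::'a::complex_inner. 0::'a)"
  unfolding bounded_clinear_op_def by (auto intro: exI[of _ 0])

lemma sum_cinner_bounded_op_le:
  fixes E :: "'a::complex_inner set"
  assumes onb: "orthonormal_basis E" "finite F" "F \<subseteq> E"
    and op: "bounded_clinear_op \<eta>" and K: "\<And>x. norm (\<eta> x) \<le> norm x * K"
  shows "(\<Sum>g\<in>F. (cmod (cinner f (\<eta> g)))\<^sup>2) \<le> (norm f * K)\<^sup>2"
proof -
  define T where "T = (\<Sum>g\<in>F. (cmod (cinner f (\<eta> g)))\<^sup>2)"
  define w where "w = (\<Sum>g\<in>F. scaleC (cinner (\<eta> g) f) g)"
  \<comment> \<open>test \<open>f\<close> against \<open>\<eta> w\<close>, where \<open>w\<close> has the coordinates of \<open>\<eta>\<^sup>* f\<close> on \<open>F\<close>\<close>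
  have "T \<ge> 0"
    unfolding T_def by (simp add: sum_nonneg)
  have "norm w = sqrt T"
    using norm_onb_combination[OF onb, of "\<lambda>g. cinner (\<eta> g) f"]
    unfolding w_def T_def cmod_cinner_commute[of "\<eta> _" f] by (simp add: real_sqrt_unique)
  have "cinner f (\<eta> w) = (\<Sum>g\<in>F. cnj (cinner f (\<eta> g)) * cinner f (\<eta> g))"
    unfolding w_def by (simp add: bounded_clinear_op_sum[OF op] cinner_sum_right cinner_scaleC_right)
  then have "cinner f (\<eta> w) = of_real T"
    unfolding T_def by (simp add: cnj_mult_self del: cnj_cinner)
  then have "T \<le> norm f * norm (\<eta> w)"
    using complex_cauchy_schwarz[of f "\<eta> w"] \<open>T \<ge> 0\<close> by simp
  also have "\<dots> \<le> norm f * K * sqrt T"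
    using mult_left_mono[OF K[of w] norm_ge_zero[of f]] \<open>norm w = sqrt T\<close> by (simp add: mult_ac)
  finally have "sqrt T * sqrt T \<le> (norm f * K) * sqrt T"
    using \<open>T \<ge> 0\<close> by simp
  show ?thesis
  proof (cases "T = 0")
    case True
    then show ?thesis
      unfolding T_def[symmetric] by simp
  next
    case False
    then have "sqrt T \<le> norm f * K"
      using mult_right_le_imp_le[OF \<open>sqrt T * sqrt T \<le> (norm f * K) * sqrt T\<close>] \<open>T \<ge> 0\<close>
      by simp
    then show ?thesis
      using power_mono[of "sqrt T" "norm f * K" 2] \<open>T \<ge> 0\<close> unfolding T_def[symmetric] by simp
  qed
qed

lemma adjoint_vector_exists:
  fixes E :: "'a::chilbert_space set"
  assumes onb: "orthonormal_basis E" and "countable E" and op: "bounded_clinear_op \<eta>"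
  obtains v where "\<And>x. cinner v x = cinner f (\<eta> x)"
    and "((\<lambda>g. (cmod (cinner f (\<eta> g)))\<^sup>2) has_sum (norm v)\<^sup>2) E"
proof -
  interpret bl: bounded_linear \<eta>
    by (rule bounded_clinear_op_bounded_linear[OF op])
  obtain K where K: "\<And>x. norm (\<eta> x) \<le> norm x * K"
    using bl.bounded by blast
  define c where "c g = cinner (\<eta> g) f" for g
  have cmod_c: "cmod (c g) = cmod (cinner f (\<eta> g))" for g
    unfolding c_def by (rule cmod_cinner_commute)
  have bound: "(\<Sum>g\<in>F. (cmod (c g))\<^sup>2) \<le> (norm f * K)\<^sup>2" if "finite F" "F \<subseteq> E" for F
    unfolding cmod_c by (rule sum_cinner_bounded_op_le[OF onb that op K])
  have summable: "(\<lambda>g. (cmod (c g))\<^sup>2) summable_on E"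
    using bound by (intro nonneg_bdd_above_summable_on) (auto intro!: bdd_aboveI)
  obtain v where v: "(\<lambda>N. \<Sum>e\<in>basis_prefix E N. scaleC (c e) e) \<longlonglongrightarrow> v"
    "\<And>e. e \<in> E \<Longrightarrow> cinner e v = c e" "(norm v)\<^sup>2 = infsum (\<lambda>g. (cmod (c g))\<^sup>2) E"
    using onb_series_converges[OF onb \<open>countable E\<close> summable[unfolded summable_iff_has_sum_infsum]]
    by blast
  have "cinner v x = cinner f (\<eta> x)" for x
  proof -
    define x\<^sub>N where "x\<^sub>N N = (\<Sum>e\<in>basis_prefix E N. scaleC (cinner e x) e)" for N
    have lim: "x\<^sub>N \<longlonglongrightarrow> x"
      unfolding x\<^sub>N_def by (rule onb_expansion(1)[OF onb \<open>countable E\<close>])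
    have "cinner v (x\<^sub>N N) = cinner f (\<eta> (x\<^sub>N N))" for N
    proof -
      have "cinner v e = cinner f (\<eta> e)" if "e \<in> basis_prefix E N" for e
        using v(2) that basis_prefix_subset[of E N] unfolding c_def by (metis cnj_cinner subsetD)
      then show ?thesis
        unfolding x\<^sub>N_def
        by (simp add: bounded_clinear_op_sum[OF op] cinner_sum_right cinner_scaleC_right)
    qed
    moreover have "(\<lambda>N. cinner v (x\<^sub>N N)) \<longlonglongrightarrow> cinner v x"
      by (rule bounded_linear.tendsto[OF bounded_linear_cinner_right lim])
    moreover have "(\<lambda>N. cinner f (\<eta> (x\<^sub>N N))) \<longlonglongrightarrow> cinner f (\<eta> x)"
      by (rule bounded_linear.tendsto[OF bounded_linear_cinner_right bl.tendsto[OF lim]])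
    ultimately show ?thesis
      using LIMSEQ_unique by simp
  qed
  moreover have "((\<lambda>g. (cmod (cinner f (\<eta> g)))\<^sup>2) has_sum (norm v)\<^sup>2) E"
    using summable v(3) unfolding cmod_c by (simp add: summable_iff_has_sum_infsum)
  ultimately show ?thesis
    using that by blast
qed

section \<open>Square-summable families\<close>

definition l2_summable_on :: "'a set \<Rightarrow> ('a \<Rightarrow> 'b::real_normed_vector) \<Rightarrow> bool" where
  "l2_summable_on E \<zeta> \<longleftrightarrow> (\<lambda>e. (norm (\<zeta> e))\<^sup>2) summable_on E"

definition l2_norm_on :: "'a set \<Rightarrow> ('a \<Rightarrow> 'b::real_normed_vector) \<Rightarrow> real" where
  "l2_norm_on E \<zeta> = sqrt (\<Sum>\<^sub>\<infinity>e\<in>E. (norm (\<zeta> e))\<^sup>2)"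

lemma l2_norm_on_nonneg: "l2_norm_on E \<zeta> \<ge> 0"
  unfolding l2_norm_on_def by (simp add: infsum_nonneg)

lemma l2_summable_on_0: "l2_summable_on E (\<lambda>x. 0)" "l2_norm_on E (\<lambda>x. 0) = 0"
  unfolding l2_summable_on_def l2_norm_on_def by simp_all

lemma norm_le_l2_norm_on:
  assumes "l2_summable_on E \<zeta>" "c \<in> E"
  shows "norm (\<zeta> c) \<le> l2_norm_on E \<zeta>"
proof -
  have "(norm (\<zeta> c))\<^sup>2 \<le> (\<Sum>\<^sub>\<infinity>e\<in>E. (norm (\<zeta> e))\<^sup>2)"
    using finite_sum_le_infsum[of "\<lambda>e. (norm (\<zeta> e))\<^sup>2" E "{c}"] assms
    unfolding l2_summable_on_def by simp
  from real_sqrt_le_mono[OF this] show ?thesis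
    unfolding l2_norm_on_def by simp
qed

lemma l2_summable_on_le_finite_sums:
  assumes "\<And>F. finite F \<Longrightarrow> F \<subseteq> E \<Longrightarrow> (\<Sum>e\<in>F. (norm (\<zeta> e))\<^sup>2) \<le> B\<^sup>2" "B \<ge> 0"
  shows "l2_summable_on E \<zeta>" "l2_norm_on E \<zeta> \<le> B"
proof -
  show summable: "l2_summable_on E \<zeta>"
    unfolding l2_summable_on_def
    using assms(1) by (intro nonneg_bdd_above_summable_on) (auto intro!: bdd_aboveI)
  have "(\<Sum>\<^sub>\<infinity>e\<in>E. (norm (\<zeta> e))\<^sup>2) \<le> B\<^sup>2"
    using summable assms(1) unfolding l2_summable_on_def by (intro infsum_le_finite_sums) auto
  from real_sqrt_le_mono[OF this] show "l2_norm_on E \<zeta> \<le> B"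
    unfolding l2_norm_on_def using assms(2) by simp
qed

lemma l2_summable_on_compare:
  assumes "l2_summable_on E \<xi>" "\<And>e. e \<in> E \<Longrightarrow> norm (\<zeta> e) \<le> C * norm (\<xi> e)"
  shows "l2_summable_on E \<zeta>" "l2_norm_on E \<zeta> \<le> \<bar>C\<bar> * l2_norm_on E \<xi>"
proof -
  have bound: "(\<Sum>e\<in>F. (norm (\<zeta> e))\<^sup>2) \<le> (\<bar>C\<bar> * l2_norm_on E \<xi>)\<^sup>2" if "finite F" "F \<subseteq> E" for F
  proof -
    have "(norm (\<zeta> e))\<^sup>2 \<le> C\<^sup>2 * (norm (\<xi> e))\<^sup>2" if "e \<in> E" for e
      using power_mono[OF order_trans[OF assms(2)[OF that] mult_right_mono[OF abs_ge_self]], of 2]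
      by (simp add: power_mult_distrib)
    then have "(\<Sum>e\<in>F. (norm (\<zeta> e))\<^sup>2) \<le> C\<^sup>2 * (\<Sum>e\<in>F. (norm (\<xi> e))\<^sup>2)"
      using that by (auto simp: sum_distrib_left intro!: sum_mono)
    also have "\<dots> \<le> C\<^sup>2 * (\<Sum>\<^sub>\<infinity>e\<in>E. (norm (\<xi> e))\<^sup>2)"
      using assms(1) that unfolding l2_summable_on_def
      by (intro mult_left_mono finite_sum_le_infsum) auto
    also have "\<dots> = (\<bar>C\<bar> * l2_norm_on E \<xi>)\<^sup>2"
      unfolding l2_norm_on_def by (simp add: power_mult_distrib infsum_nonneg)
    finally show ?thesis .
  qed
  show "l2_summable_on E \<zeta>" "l2_norm_on E \<zeta> \<le> \<bar>C\<bar> * l2_norm_on E \<xi>"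
    using l2_summable_on_le_finite_sums[OF bound] by (simp_all add: l2_norm_on_nonneg)
qed

lemma l2_summable_on_add:
  assumes "l2_summable_on E \<zeta>" "l2_summable_on E \<xi>"
  shows "l2_summable_on E (\<lambda>x. \<zeta> x + \<xi> x)"
    and "l2_norm_on E (\<lambda>x. \<zeta> x + \<xi> x) \<le> l2_norm_on E \<zeta> + l2_norm_on E \<xi>"
proof -
  have L2_le: "L2_set (\<lambda>e. norm (\<eta> e)) F \<le> l2_norm_on E \<eta>"
    if "l2_summable_on E \<eta>" "finite F" "F \<subseteq> E" for \<eta> :: "'a \<Rightarrow> 'b" and F
    using that unfolding L2_set_def l2_norm_on_def l2_summable_on_def
    by (intro real_sqrt_le_mono finite_sum_le_infsum) auto
  have bound: "(\<Sum>e\<in>F. (norm (\<zeta> e + \<xi> e))\<^sup>2) \<le> (l2_norm_on E \<zeta> + l2_norm_on E \<xi>)\<^sup>2"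
    if "finite F" "F \<subseteq> E" for F
  proof -
    have "L2_set (\<lambda>e. norm (\<zeta> e + \<xi> e)) F \<le> L2_set (\<lambda>e. norm (\<zeta> e) + norm (\<xi> e)) F"
      by (rule L2_set_mono) (auto simp: norm_triangle_ineq)
    also have "\<dots> \<le> L2_set (\<lambda>e. norm (\<zeta> e)) F + L2_set (\<lambda>e. norm (\<xi> e)) F"
      by (rule L2_set_triangle_ineq)
    also have "\<dots> \<le> l2_norm_on E \<zeta> + l2_norm_on E \<xi>"
      using L2_le assms that by (meson add_mono)
    finally have "sqrt (\<Sum>e\<in>F. (norm (\<zeta> e + \<xi> e))\<^sup>2) \<le> l2_norm_on E \<zeta> + l2_norm_on E \<xi>"
      unfolding L2_set_def .
    from power_mono[OF this, of 2] show ?thesis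
      by (simp add: sum_nonneg)
  qed
  show "l2_summable_on E (\<lambda>x. \<zeta> x + \<xi> x)"
    and "l2_norm_on E (\<lambda>x. \<zeta> x + \<xi> x) \<le> l2_norm_on E \<zeta> + l2_norm_on E \<xi>"
    using l2_summable_on_le_finite_sums[OF bound] by (simp_all add: l2_norm_on_nonneg)
qed

lemma l2_summable_on_scaleC:
  fixes \<zeta> :: "'a \<Rightarrow> 'b::complex_inner"
  assumes "l2_summable_on E \<zeta>"
  shows "l2_summable_on E (\<lambda>x. scaleC c (\<zeta> x))"
    and "l2_norm_on E (\<lambda>x. scaleC c (\<zeta> x)) = cmod c * l2_norm_on E \<zeta>"
proof -
  have eq: "(\<lambda>e. (norm (scaleC c (\<zeta> e)))\<^sup>2) = (\<lambda>e. (cmod c)\<^sup>2 * (norm (\<zeta> e))\<^sup>2)"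
    by (simp add: power_mult_distrib)
  show "l2_summable_on E (\<lambda>x. scaleC c (\<zeta> x))"
    using assms unfolding l2_summable_on_def eq by (rule summable_on_cmult_right)
  show "l2_norm_on E (\<lambda>x. scaleC c (\<zeta> x)) = cmod c * l2_norm_on E \<zeta>"
    unfolding l2_norm_on_def eq by (simp add: infsum_cmult_right' real_sqrt_mult)
qed

lemma l2_summable_on_diff:
  assumes "l2_summable_on E \<zeta>" "l2_summable_on E \<xi>"
  shows "l2_summable_on E (\<lambda>x. \<zeta> x - \<xi> x)"
    and "l2_norm_on E (\<lambda>x. \<zeta> x - \<xi> x) \<le> l2_norm_on E \<zeta> + l2_norm_on E \<xi>"
proof -
  have neg: "l2_summable_on E (\<lambda>x. - \<xi> x)" "l2_norm_on E (\<lambda>x. - \<xi> x) = l2_norm_on E \<xi>"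
    using assms(2) unfolding l2_summable_on_def l2_norm_on_def by simp_all
  show "l2_summable_on E (\<lambda>x. \<zeta> x - \<xi> x)"
    and "l2_norm_on E (\<lambda>x. \<zeta> x - \<xi> x) \<le> l2_norm_on E \<zeta> + l2_norm_on E \<xi>"
    using l2_summable_on_add[OF assms(1) neg(1)] neg(2) by simp_all
qed

lemma l2_summable_on_convex_step:
  fixes \<zeta> \<xi> :: "'a \<Rightarrow> 'b::complex_inner"
  assumes "l2_summable_on E \<zeta>" "l2_summable_on E \<xi>" "0 \<le> \<theta>" "\<theta> \<le> 1"
  shows "l2_summable_on E (\<lambda>x. \<zeta> x + scaleC (of_real \<theta>) (\<xi> x - \<zeta> x))"
    and "l2_norm_on E (\<lambda>x. \<zeta> x + scaleC (of_real \<theta>) (\<xi> x - \<zeta> x)) \<le> 2 * l2_norm_on E \<zeta> + l2_norm_on E \<xi>"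
proof -
  note diff = l2_summable_on_diff[OF assms(2,1)]
  note step = l2_summable_on_scaleC[OF diff(1), of "of_real \<theta>"]
  have "l2_norm_on E (\<lambda>x. scaleC (of_real \<theta>) (\<xi> x - \<zeta> x)) \<le> l2_norm_on E \<xi> + l2_norm_on E \<zeta>"
    using step(2) mult_left_le_one_le[OF l2_norm_on_nonneg assms(3,4), of E "\<lambda>x. \<xi> x - \<zeta> x"] diff(2)
      \<open>0 \<le> \<theta>\<close> by simp
  then show "l2_summable_on E (\<lambda>x. \<zeta> x + scaleC (of_real \<theta>) (\<xi> x - \<zeta> x))"
    and "l2_norm_on E (\<lambda>x. \<zeta> x + scaleC (of_real \<theta>) (\<xi> x - \<zeta> x)) \<le> 2 * l2_norm_on E \<zeta> + l2_norm_on E \<xi>"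
    using l2_summable_on_add[OF assms(1) step(1)] by simp_all
qed

lemma infsum_split_finite:
  fixes f :: "'a \<Rightarrow> real"
  assumes "f summable_on E" "finite F" "F \<subseteq> E"
  shows "infsum f E = sum f F + infsum f (E - F)"
proof -
  have "infsum f (F \<union> (E - F)) = infsum f F + infsum f (E - F)"
    using assms summable_on_subset_banach[OF assms(1), of F] summable_on_subset_banach[OF assms(1), of "E - F"]
    by (intro infsum_Un_disjoint) auto
  moreover have "F \<union> (E - F) = E"
    using assms by auto
  ultimately show ?thesis
    using assms by simp
qed

lemma infsum_tendsto_zero_dominated:
  fixes g :: "nat \<Rightarrow> 'a \<Rightarrow> real"
  assumes h: "h summable_on E"
    and bounded: "\<And>N e. e \<in> E \<Longrightarrow> 0 \<le> g N e \<and> g N e \<le> h e"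
    and pointwise: "\<And>e. e \<in> E \<Longrightarrow> (\<lambda>N. g N e) \<longlonglongrightarrow> 0"
  shows "(\<lambda>N. \<Sum>\<^sub>\<infinity>e\<in>E. g N e) \<longlonglongrightarrow> 0"
proof (rule LIMSEQ_I)
  fix r :: real
  assume "r > 0"
  \<comment> \<open>a finite \<open>F\<close> carries all but \<open>r/2\<close> of the dominating sum, and \<open>g N\<close> is small on \<open>F\<close>\<close>
  have "eventually (\<lambda>F. dist (sum h F) (infsum h E) < r/2) (finite_subsets_at_top E)"
    using h \<open>r > 0\<close> unfolding summable_iff_has_sum_infsum has_sum_def by (intro tendstoD) auto
  then obtain F where F: "finite F" "F \<subseteq> E"
    and tail: "\<forall>Y. finite Y \<and> F \<subseteq> Y \<and> Y \<subseteq> E \<longrightarrow> dist (sum h Y) (infsum h E) < r/2"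
    unfolding eventually_finite_subsets_at_top by blast
  have close: "dist (sum h F) (infsum h E) < r/2"
    using tail F by blast
  have summable_g: "g N summable_on A" if "A \<subseteq> E" for N A
    using bounded that by (intro summable_on_comparison_test[OF summable_on_subset_banach[OF h that]]) auto
  have "(\<lambda>N. sum (g N) F) \<longlonglongrightarrow> 0"
    using pointwise F by (intro tendsto_null_sum) auto
  then have "eventually (\<lambda>N. dist (sum (g N) F) 0 < r/2) sequentially"
    using \<open>r > 0\<close> by (intro tendstoD) auto
  then obtain N\<^sub>0 where N\<^sub>0: "\<forall>N\<ge>N\<^sub>0. dist (sum (g N) F) 0 < r/2"
    unfolding eventually_sequentially by blast
  have "norm (infsum (g N) E - 0) < r" if "N \<ge> N\<^sub>0" for N
  proof -
    have "infsum (g N) E = sum (g N) F + infsum (g N) (E - F)"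
      using infsum_split_finite[OF summable_g F] by simp
    also have "infsum (g N) (E - F) \<le> infsum h (E - F)"
      using summable_g summable_on_subset_banach[OF h, of "E - F"] bounded by (intro infsum_mono) auto
    also have "infsum h (E - F) = infsum h E - sum h F"
      using infsum_split_finite[OF h F] by simp
    finally have "infsum (g N) E < r/2 + r/2"
      using N\<^sub>0[rule_format, OF that] close unfolding dist_real_def abs_less_iff by linarith
    moreover have "infsum (g N) E \<ge> 0"
      using bounded by (intro infsum_nonneg) auto
    ultimately show ?thesis
      by simp
  qed
  then show "\<exists>N\<^sub>0. \<forall>N\<ge>N\<^sub>0. norm (infsum (g N) E - 0) < r"
    by blast
qed

lemma summable_on_columns_nonneg:
  fixes G :: "'a \<Rightarrow> 'b \<Rightarrow> real"
  assumes nonneg: "\<And>a b. G a b \<ge> 0"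
    and rows: "\<And>a. ((\<lambda>b. G a b) has_sum r a) B" and "r summable_on A"
    and columns: "\<And>b. ((\<lambda>a. G a b) has_sum c b) A"
  shows "c summable_on B"
proof -
  have "(\<lambda>(a, b). G a b) summable_on A \<times> B"
    using rows \<open>r summable_on A\<close> nonneg by (intro summable_on_SigmaI[where g = r]) auto
  then have "(\<lambda>(b, a). G a b) summable_on B \<times> A"
    using summable_on_swap[of "\<lambda>(a, b). G a b" A B] by simp
  then have "(\<lambda>b. \<Sum>\<^sub>\<infinity>a\<in>A. (\<lambda>(b, a). G a b) (b, a)) summable_on B"
    by (rule summable_on_SigmaD) (use columns has_sum_imp_summable in auto)
  moreover have "(\<lambda>b. \<Sum>\<^sub>\<infinity>a\<in>A. G a b) = c"
    using columns by (auto intro: infsumI)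
  ultimately show ?thesis
    by simp
qed

text \<open>Both sums equal \<open>\<Sum>\<^sub>e \<Sum>\<^sub>f |\<langle>f, \<eta> e\<rangle>|\<^sup>2\<close>; exchanging the order of summation turns
  the sum over \<open>E\<^sub>1\<close> into the sum of \<open>\<parallel>\<eta>\<^sup>* f\<parallel>\<^sup>2\<close> over \<open>f \<in> E\<^sub>0\<close>, and once more into a sum over
  \<open>e \<in> E\<^sub>0\<close>.\<close>

lemma l2_summable_on_onb_change:
  fixes E\<^sub>0 E\<^sub>1 :: "'a::chilbert_space set"
  assumes onb\<^sub>0: "orthonormal_basis E\<^sub>0" "countable E\<^sub>0"
    and onb\<^sub>1: "orthonormal_basis E\<^sub>1" "countable E\<^sub>1"
    and op: "bounded_clinear_op \<eta>" and summable: "l2_summable_on E\<^sub>1 \<eta>"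
  shows "l2_summable_on E\<^sub>0 \<eta>"
proof -
  define G where "G e f = (cmod (cinner f (\<eta> e)))\<^sup>2" for e f
  have rows: "((\<lambda>f. G e f) has_sum (norm (\<eta> e))\<^sup>2) E\<^sub>0" for e
    unfolding G_def by (rule onb_expansion(2)[OF onb\<^sub>0])
  have "\<forall>f. \<exists>v. (\<forall>x. cinner v x = cinner f (\<eta> x)) \<and> ((\<lambda>g. G g f) has_sum (norm v)\<^sup>2) E\<^sub>0"
  proof
    fix f
    obtain v where "\<And>x. cinner v x = cinner f (\<eta> x)" "((\<lambda>g. G g f) has_sum (norm v)\<^sup>2) E\<^sub>0"
      using adjoint_vector_exists[OF onb\<^sub>0 op, of f] unfolding G_def by blast
    then show "\<exists>v. (\<forall>x. cinner v x = cinner f (\<eta> x)) \<and> ((\<lambda>g. G g f) has_sum (norm v)\<^sup>2) E\<^sub>0"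
      by blast
  qed
  then obtain V where "\<forall>f. (\<forall>x. cinner (V f) x = cinner f (\<eta> x)) \<and> ((\<lambda>g. G g f) has_sum (norm (V f))\<^sup>2) E\<^sub>0"
    by (auto dest: choice)
  then have V: "\<And>f x. cinner (V f) x = cinner f (\<eta> x)" "\<And>f. ((\<lambda>g. G g f) has_sum (norm (V f))\<^sup>2) E\<^sub>0"
    by blast+
  have columns: "((\<lambda>e. G e f) has_sum (norm (V f))\<^sup>2) E\<^sub>1" for f
  proof -
    have "cmod (cinner e (V f)) = cmod (cinner f (\<eta> e))" for e
      using cmod_cinner_commute[of e "V f"] V(1)[of f e] by simp
    then show ?thesis
      using onb_expansion(2)[OF onb\<^sub>1, of "V f"] unfolding G_def by simp
  qed
  have adjoint: "(\<lambda>f. (norm (V f))\<^sup>2) summable_on E\<^sub>0"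
    by (rule summable_on_columns_nonneg[where G = G, OF _ rows summable[unfolded l2_summable_on_def]
          columns]) (simp add: G_def)
  show ?thesis
    unfolding l2_summable_on_def
    by (rule summable_on_columns_nonneg[where G = "\<lambda>f g. G g f", OF _ V(2) adjoint rows]) (simp add: G_def)
qed

section \<open>Hilbert--Schmidt operators\<close>

definition hs_basis :: "'a::complex_inner set" where
  "hs_basis = (SOME E. orthonormal_basis E)"

lemma orthonormal_basis_hs_basis: "orthonormal_basis hs_basis"
  unfolding hs_basis_def using someI_ex[OF orthonormal_basis_exists] .

lemma hs_inner_commute: "hs_inner \<xi> \<zeta> = cnj (hs_inner \<zeta> \<xi>)"
  unfolding hs_inner_def by (subst infsum_cnj[symmetric]) (metis cinner_commute)

lemma hs_norm_eq_l2_norm_on: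
  assumes "l2_summable_on hs_basis \<eta>"
  shows "hs_norm \<eta> = l2_norm_on hs_basis \<eta>"
proof -
  have "((\<lambda>e. (norm (\<eta> e))\<^sup>2) has_sum (\<Sum>\<^sub>\<infinity>e\<in>hs_basis. (norm (\<eta> e))\<^sup>2)) hs_basis"
    using assms unfolding l2_summable_on_def by simp
  then have "((\<lambda>e. cinner (\<eta> e) (\<eta> e)) has_sum of_real (\<Sum>\<^sub>\<infinity>e\<in>hs_basis. (norm (\<eta> e))\<^sup>2)) hs_basis"
    unfolding cinner_self_eq_norm_power2 by (rule has_sum_of_real)
  then have "hs_inner \<eta> \<eta> = of_real (\<Sum>\<^sub>\<infinity>e\<in>hs_basis. (norm (\<eta> e))\<^sup>2)"
    unfolding hs_inner_def hs_basis_def[symmetric] by (rule infsumI)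
  then show ?thesis
    unfolding hs_norm_def l2_norm_on_def by simp
qed

definition rank_one :: "'a::complex_inner \<Rightarrow> 'a \<Rightarrow> 'a \<Rightarrow> 'a" where
  "rank_one u v x = scaleC (cinner v x) u"

lemma bounded_clinear_op_rank_one: "bounded_clinear_op (rank_one u v)"
  unfolding bounded_clinear_op_def rank_one_def
proof (intro conjI allI exI)
  show "scaleC (cinner v (x + y)) u = scaleC (cinner v x) u + scaleC (cinner v y) u" for x y
    by (simp add: cinner_add_right scaleC_add_left)
  show "scaleC (cinner v (scaleC c x)) u = scaleC c (scaleC (cinner v x) u)" for c x
    by (simp add: cinner_scaleC_right scaleC_scaleC)
  show "norm (scaleC (cinner v x) u) \<le> (norm v * norm u) * norm x" for x
    using mult_left_mono[OF complex_cauchy_schwarz[of v x] norm_ge_zero[of u]] by (simp add: mult_ac)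
qed

lemma l2_summable_on_rank_one:
  fixes E :: "'a::chilbert_space set"
  assumes "orthonormal_basis E" "countable E"
  shows "l2_summable_on E (rank_one u v)" "l2_norm_on E (rank_one u v) = norm u * norm v"
proof -
  have "(norm (rank_one u v e))\<^sup>2 = (norm u)\<^sup>2 * (cmod (cinner e v))\<^sup>2" for e
    unfolding rank_one_def by (simp add: power_mult_distrib cmod_cinner_commute[of v])
  then have "((\<lambda>e. (norm (rank_one u v e))\<^sup>2) has_sum (norm u * norm v)\<^sup>2) E"
    using has_sum_cmult_right[OF onb_expansion(2)[OF assms, of v], of "(norm u)\<^sup>2"]
    by (simp add: power_mult_distrib)
  then show "l2_summable_on E (rank_one u v)" "l2_norm_on E (rank_one u v) = norm u * norm v"
    unfolding l2_summable_on_def l2_norm_on_def by (simp_all add: has_sum_imp_summable infsumI)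
qed

lemma hs_inner_rank_one:
  assumes "i \<in> hs_basis" "j \<in> hs_basis"
  shows "hs_inner (rank_one i j) \<xi> = cinner i (\<xi> j)"
proof -
  have "hs_inner (rank_one i j) \<xi> = (\<Sum>\<^sub>\<infinity>e\<in>{j}. cinner (rank_one i j e) (\<xi> e))"
    unfolding hs_inner_def hs_basis_def[symmetric]
    using assms onb_cinner[OF orthonormal_basis_hs_basis assms(2)]
    by (intro infsum_cong_neutral) (auto simp: rank_one_def cinner_scaleC_left)
  also have "\<dots> = cinner i (\<xi> j)"
    using onb_cinner[OF orthonormal_basis_hs_basis assms(2) assms(2)]
    by (simp add: rank_one_def cinner_scaleC_left)
  finally show ?thesis .
qed

context
  assumes separable: "separable_space TYPE('h::chilbert_space)"
begin

lemma countable_hs_basis: "countable (hs_basis :: 'h set)"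
  by (rule orthonormal_basis_countable[OF separable orthonormal_basis_hs_basis])

lemma S2_iff: "(\<eta> :: 'h \<Rightarrow> 'h) \<in> S2 \<longleftrightarrow> bounded_clinear_op \<eta> \<and> l2_summable_on hs_basis \<eta>"
proof
  assume "\<eta> \<in> S2"
  then obtain E :: "'h set" where op: "bounded_clinear_op \<eta>" and E: "orthonormal_basis E"
    and "l2_summable_on E \<eta>"
    unfolding S2_def hilbert_schmidt_def l2_summable_on_def by blast
  then show "bounded_clinear_op \<eta> \<and> l2_summable_on hs_basis \<eta>"
    using l2_summable_on_onb_change[OF orthonormal_basis_hs_basis countable_hs_basis E
        orthonormal_basis_countable[OF separable E]]
    by blast
next
  assume "bounded_clinear_op \<eta> \<and> l2_summable_on hs_basis \<eta>"
  then show "\<eta> \<in> S2"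
    unfolding S2_def hilbert_schmidt_def l2_summable_on_def using orthonormal_basis_hs_basis by blast
qed

lemma hs_norm_S2: "(\<eta> :: 'h \<Rightarrow> 'h) \<in> S2 \<Longrightarrow> hs_norm \<eta> = l2_norm_on hs_basis \<eta>"
  using S2_iff hs_norm_eq_l2_norm_on by blast

lemma S2_0: "(\<lambda>x::'h. 0) \<in> S2"
  unfolding S2_iff using bounded_clinear_op_0 l2_summable_on_0 by blast

lemma S2_add: "(\<zeta> :: 'h \<Rightarrow> 'h) \<in> S2 \<Longrightarrow> \<xi> \<in> S2 \<Longrightarrow> (\<lambda>x. \<zeta> x + \<xi> x) \<in> S2"
  unfolding S2_iff using bounded_clinear_op_plus l2_summable_on_add(1) by blast

lemma S2_scaleC: "(\<zeta> :: 'h \<Rightarrow> 'h) \<in> S2 \<Longrightarrow> (\<lambda>x. scaleC c (\<zeta> x)) \<in> S2"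
  unfolding S2_iff using bounded_clinear_op_scaleC_left l2_summable_on_scaleC(1) by blast

lemma S2_diff:
  assumes "(\<zeta> :: 'h \<Rightarrow> 'h) \<in> S2" "\<xi> \<in> S2"
  shows "(\<lambda>x. \<zeta> x - \<xi> x) \<in> S2"
proof -
  have "(\<lambda>x. \<zeta> x + scaleC (- 1) (\<xi> x)) \<in> S2"
    using assms by (intro S2_add S2_scaleC)
  moreover have "scaleC (- 1) y = - y" for y :: 'h
    by (metis scaleC_minus_left scaleC_one)
  ultimately show ?thesis
    by simp
qed

lemma S2_rank_one: "rank_one (u :: 'h) v \<in> S2"
  unfolding S2_iff
  using bounded_clinear_op_rank_one l2_summable_on_rank_one(1)[OF orthonormal_basis_hs_basis countable_hs_basis]
  by blast

lemma S2_sum: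
  assumes "finite I" "\<And>i. i \<in> I \<Longrightarrow> (\<zeta> i :: 'h \<Rightarrow> 'h) \<in> S2"
  shows "(\<lambda>x. \<Sum>i\<in>I. scaleC (c i) (\<zeta> i x)) \<in> S2"
  using assms by (induction I rule: finite_induct) (simp_all add: S2_0 S2_add S2_scaleC)

end

lemma selfadjoint_on_S2_add:
  "selfadjoint_on_S2 A \<Longrightarrow> \<eta> \<in> S2 \<Longrightarrow> \<tau> \<in> S2 \<Longrightarrow> A (\<lambda>x. \<eta> x + \<tau> x) = (\<lambda>x. A \<eta> x + A \<tau> x)"
  unfolding selfadjoint_on_S2_def by blast

lemma selfadjoint_on_S2_scaleC:
  "selfadjoint_on_S2 A \<Longrightarrow> \<eta> \<in> S2 \<Longrightarrow> A (\<lambda>x. scaleC c (\<eta> x)) = (\<lambda>x. scaleC c (A \<eta> x))"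
  unfolding selfadjoint_on_S2_def by blast

lemma selfadjoint_on_S2_S2: "selfadjoint_on_S2 A \<Longrightarrow> \<eta> \<in> S2 \<Longrightarrow> A \<eta> \<in> S2"
  unfolding selfadjoint_on_S2_def by blast

lemma selfadjoint_on_S2_hs_inner:
  "selfadjoint_on_S2 A \<Longrightarrow> \<eta> \<in> S2 \<Longrightarrow> \<tau> \<in> S2 \<Longrightarrow> hs_inner (A \<eta>) \<tau> = hs_inner \<eta> (A \<tau>)"
  unfolding selfadjoint_on_S2_def by blast

context
  fixes A :: "('h::chilbert_space \<Rightarrow> 'h) \<Rightarrow> 'h \<Rightarrow> 'h"
  assumes separable: "separable_space TYPE('h)" and selfadjoint: "selfadjoint_on_S2 A"
begin

lemma selfadjoint_on_S2_bounded: obtains K where "K \<ge> 0" "\<And>\<eta>. \<eta> \<in> S2 \<Longrightarrow> hs_norm (A \<eta>) \<le> K * hs_norm \<eta>"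
proof -
  obtain K where K: "\<And>\<eta>. \<eta> \<in> S2 \<Longrightarrow> hs_norm (A \<eta>) \<le> K * hs_norm \<eta>"
    using selfadjoint unfolding selfadjoint_on_S2_def by blast
  have "hs_norm (A \<eta>) \<le> max K 0 * hs_norm \<eta>" if "\<eta> \<in> S2" for \<eta>
  proof -
    have "hs_norm \<eta> \<ge> 0"
      using hs_norm_S2[OF separable that] l2_norm_on_nonneg[of hs_basis \<eta>] by simp
    then have "K * hs_norm \<eta> \<le> max K 0 * hs_norm \<eta>"
      by (intro mult_right_mono) simp_all
    with K[OF that] show ?thesis
      by linarith
  qed
  then show ?thesis
    using that[of "max K 0"] by simp
qed

lemma selfadjoint_on_S2_sum:
  assumes "finite I" "\<And>i. i \<in> I \<Longrightarrow> \<zeta> i \<in> S2"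
  shows "A (\<lambda>x. \<Sum>i\<in>I. scaleC (c i) (\<zeta> i x)) = (\<lambda>x. \<Sum>i\<in>I. scaleC (c i) (A (\<zeta> i) x))"
  using assms
proof (induction I rule: finite_induct)
  case empty
  then show ?case
    using selfadjoint_on_S2_scaleC[OF selfadjoint S2_0[OF separable], of 0] by simp
next
  case (insert j I)
  then have "(\<lambda>x. scaleC (c j) (\<zeta> j x)) \<in> S2" "(\<lambda>x. \<Sum>i\<in>I. scaleC (c i) (\<zeta> i x)) \<in> S2"
    by (simp_all add: S2_scaleC[OF separable] S2_sum[OF separable])
  then show ?case
    using insert selfadjoint_on_S2_add[OF selfadjoint] selfadjoint_on_S2_scaleC[OF selfadjoint]
    by simp
qed

end

section \<open>Compressions to finite sections of the basis\<close>

definition basis_proj :: "'a::complex_inner set \<Rightarrow> nat \<Rightarrow> 'a \<Rightarrow> 'a" where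
  "basis_proj E N x = (\<Sum>e\<in>basis_prefix E N. scaleC (cinner e x) e)"

definition compress :: "'a::complex_inner set \<Rightarrow> nat \<Rightarrow> ('a \<Rightarrow> 'a) \<Rightarrow> 'a \<Rightarrow> 'a" where
  "compress E N \<zeta> x = basis_proj E N (\<zeta> (basis_proj E N x))"

lemma basis_proj_add: "basis_proj E N (x + y) = basis_proj E N x + basis_proj E N y"
  unfolding basis_proj_def by (simp add: cinner_add_right scaleC_add_left sum.distrib)

lemma compress_plus: "compress E N (\<lambda>x. \<zeta> x + \<xi> x) x = compress E N \<zeta> x + compress E N \<xi> x"
  unfolding compress_def by (simp add: basis_proj_add)

lemma compress_0 [simp]: "compress E 0 \<zeta> x = 0"
  unfolding compress_def basis_proj_def basis_prefix_def by simp

lemma norm_basis_proj: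
  fixes E :: "'a::complex_inner set"
  assumes "orthonormal_basis E"
  shows "norm (basis_proj E N x) \<le> norm x" and "norm (x - basis_proj E N x) \<le> norm x"
proof -
  define p where "p = basis_proj E N x"
  define S where "S = (\<Sum>e\<in>basis_prefix E N. (cmod (cinner e x))\<^sup>2)"
  have "S \<ge> 0"
    unfolding S_def by (simp add: sum_nonneg)
  have norm_p: "(norm p)\<^sup>2 = S"
    unfolding p_def basis_proj_def S_def
    by (rule norm_onb_combination[OF assms finite_basis_prefix basis_prefix_subset])
  have bessel: "S \<le> (norm x)\<^sup>2"
    unfolding S_def by (rule bessel_inequality[OF assms finite_basis_prefix basis_prefix_subset])
  have "cinner p x = (\<Sum>e\<in>basis_prefix E N. cnj (cinner e x) * cinner e x)"
    unfolding p_def basis_proj_def by (simp add: cinner_sum_left cinner_scaleC_left del: cnj_cinner)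
  then have px: "cinner p x = of_real S"
    unfolding S_def by (simp only: cnj_mult_self of_real_sum)
  have "cinner x p = cnj (cinner p x)"
    by (rule cinner_commute)
  then have xp: "cinner x p = of_real S"
    unfolding px by simp
  have "cinner (x - p) (x - p) = cinner x x - of_real S"
    using px xp norm_p cinner_self_eq_norm_power2[of p]
    by (simp add: cinner_diff_left cinner_diff_right)
  then have "(norm (x - p))\<^sup>2 \<le> (norm x)\<^sup>2"
    using \<open>S \<ge> 0\<close> by (simp add: power2_norm_eq_cinner)
  then show "norm (x - basis_proj E N x) \<le> norm x"
    unfolding p_def[symmetric] by (rule power2_le_imp_le) simp
  have "(norm p)\<^sup>2 \<le> (norm x)\<^sup>2"
    using norm_p bessel by simp
  then show "norm (basis_proj E N x) \<le> norm x"
    unfolding p_def[symmetric] by (rule power2_le_imp_le) simp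
qed

lemma basis_proj_basis:
  fixes E :: "'a::complex_inner set"
  assumes "orthonormal_basis E" "e \<in> E"
  shows "basis_proj E N e = (if e \<in> basis_prefix E N then e else 0)"
proof -
  have "basis_proj E N e = (\<Sum>i\<in>basis_prefix E N. if i = e then e else 0)"
    unfolding basis_proj_def using assms basis_prefix_subset[of E N]
    by (intro sum.cong) (auto simp: onb_cinner scaleC_one)
  then show ?thesis
    by (simp add: scaleC_one)
qed

lemma norm_compress_basis:
  fixes E :: "'a::complex_inner set"
  assumes onb: "orthonormal_basis E" and op: "bounded_clinear_op \<zeta>" and "e \<in> E"
  shows "norm (compress E N \<zeta> e) \<le> norm (\<zeta> e)" and "norm (compress E N \<zeta> e - \<zeta> e) \<le> norm (\<zeta> e)"
proof -
  have "compress E N \<zeta> e = (if e \<in> basis_prefix E N then basis_proj E N (\<zeta> e) else 0)"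
    unfolding compress_def using basis_proj_basis[OF onb \<open>e \<in> E\<close>] bounded_clinear_op_zero[OF op]
    by (simp add: basis_proj_def)
  then show "norm (compress E N \<zeta> e) \<le> norm (\<zeta> e)" and "norm (compress E N \<zeta> e - \<zeta> e) \<le> norm (\<zeta> e)"
    using norm_basis_proj[OF onb, where N=N and x="\<zeta> e"] by (simp_all add: norm_minus_commute)
qed

lemma l2_summable_on_compress:
  fixes E :: "'a::complex_inner set"
  assumes "orthonormal_basis E" "bounded_clinear_op \<zeta>" "l2_summable_on E \<zeta>"
  shows "l2_summable_on E (compress E N \<zeta>)" "l2_norm_on E (compress E N \<zeta>) \<le> l2_norm_on E \<zeta>"
  using l2_summable_on_compare[OF assms(3), of "compress E N \<zeta>" 1] norm_compress_basis(1)[OF assms(1,2)]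
  by simp_all

lemma compress_tendsto:
  fixes E :: "'a::chilbert_space set"
  assumes onb: "orthonormal_basis E" "countable E"
    and op: "bounded_clinear_op \<zeta>" and summable: "l2_summable_on E \<zeta>"
  shows "(\<lambda>N. l2_norm_on E (\<lambda>x. compress E N \<zeta> x - \<zeta> x)) \<longlonglongrightarrow> 0"
proof -
  define g where "g N e = (norm (compress E N \<zeta> e - \<zeta> e))\<^sup>2" for N e
  have "(\<lambda>N. g N e) \<longlonglongrightarrow> 0" if "e \<in> E" for e
  proof -
    have "(\<lambda>N. basis_proj E N (\<zeta> e)) \<longlonglongrightarrow> \<zeta> e"
      unfolding basis_proj_def by (rule onb_expansion(1)[OF onb])
    then have "(\<lambda>N. basis_proj E N (\<zeta> e) - \<zeta> e) \<longlonglongrightarrow> 0"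
      by (rule LIM_zero)
    then have "(\<lambda>N. norm (basis_proj E N (\<zeta> e) - \<zeta> e)) \<longlonglongrightarrow> 0"
      by (rule tendsto_norm_zero)
    then have "(\<lambda>N. (norm (basis_proj E N (\<zeta> e) - \<zeta> e))\<^sup>2) \<longlonglongrightarrow> 0\<^sup>2"
      by (rule tendsto_power)
    then have "(\<lambda>N. (norm (basis_proj E N (\<zeta> e) - \<zeta> e))\<^sup>2) \<longlonglongrightarrow> 0"
      by simp
    moreover have "eventually (\<lambda>N. (norm (basis_proj E N (\<zeta> e) - \<zeta> e))\<^sup>2 = g N e) sequentially"
      using eventually_in_basis_prefix[OF onb(2) that]
      by eventually_elim (simp add: g_def compress_def basis_proj_basis[OF onb(1) that])
    ultimately show ?thesis
      by (rule Lim_transform_eventually)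
  qed
  moreover have "0 \<le> g N e \<and> g N e \<le> (norm (\<zeta> e))\<^sup>2" if "e \<in> E" for N e
    unfolding g_def using norm_compress_basis(2)[OF onb(1) op that, of N] by (simp add: power_mono)
  ultimately have "(\<lambda>N. \<Sum>\<^sub>\<infinity>e\<in>E. g N e) \<longlonglongrightarrow> 0"
    using summable unfolding l2_summable_on_def by (intro infsum_tendsto_zero_dominated) auto
  then show ?thesis
    using tendsto_real_sqrt[of "\<lambda>N. \<Sum>\<^sub>\<infinity>e\<in>E. g N e" 0] unfolding l2_norm_on_def g_def by simp
qed

lemma compress_eq_sum_rank_one:
  assumes "bounded_clinear_op \<zeta>"
  shows "compress E N \<zeta> x =
    (\<Sum>(i, j)\<in>basis_prefix E N \<times> basis_prefix E N. scaleC (cinner i (\<zeta> j)) (rank_one i j x))"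
proof -
  have "compress E N \<zeta> x =
      (\<Sum>i\<in>basis_prefix E N. scaleC (cinner i (\<Sum>j\<in>basis_prefix E N. scaleC (cinner j x) (\<zeta> j))) i)"
    unfolding compress_def basis_proj_def by (simp add: bounded_clinear_op_sum[OF assms])
  also have "\<dots> = (\<Sum>i\<in>basis_prefix E N. \<Sum>j\<in>basis_prefix E N. scaleC (cinner i (\<zeta> j)) (rank_one i j x))"
    by (simp add: cinner_sum_right cinner_scaleC_right scaleC_sum_left rank_one_def scaleC_scaleC
        mult.commute)
  finally show ?thesis
    by (simp add: sum.cartesian_product)
qed

context
  assumes separable: "separable_space TYPE('h::chilbert_space)"
begin

lemma compress_S2:
  assumes "(\<zeta> :: 'h \<Rightarrow> 'h) \<in> S2"
  shows "compress hs_basis N \<zeta> \<in> S2"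
proof -
  let ?P = "basis_prefix hs_basis N \<times> basis_prefix hs_basis N"
  have "compress hs_basis N \<zeta> =
      (\<lambda>x. \<Sum>p\<in>?P. scaleC (cinner (fst p) (\<zeta> (snd p))) (rank_one (fst p) (snd p) x))"
    using assms compress_eq_sum_rank_one[of \<zeta>] unfolding S2_iff[OF separable]
    by (simp add: case_prod_beta fun_eq_iff)
  also have "\<dots> \<in> S2"
    by (rule S2_sum[OF separable]) (simp_all add: S2_rank_one[OF separable])
  finally show ?thesis .
qed

end

context
  fixes A :: "('h::chilbert_space \<Rightarrow> 'h) \<Rightarrow> 'h \<Rightarrow> 'h"
  assumes separable: "separable_space TYPE('h)" and selfadjoint: "selfadjoint_on_S2 A"
begin

text \<open>The error of the double compression is \<open>Q\<^sub>N A (Q\<^sub>N \<eta> - \<eta>) + (Q\<^sub>N (A \<eta>) - A \<eta>)\<close>, and \<open>Q\<^sub>N\<close> is a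
  contraction that converges strongly to the identity.\<close>

lemma compress_selfadjoint_error_le:
  assumes "\<eta> \<in> S2"
  obtains K where "\<And>N. l2_norm_on hs_basis (\<lambda>x. compress hs_basis N (A (compress hs_basis N \<eta>)) x - A \<eta> x)
    \<le> K * l2_norm_on hs_basis (\<lambda>x. compress hs_basis N \<eta> x - \<eta> x)
      + l2_norm_on hs_basis (\<lambda>x. compress hs_basis N (A \<eta>) x - A \<eta> x)"
proof -
  let ?Q = "compress (hs_basis :: 'h set)"
  obtain K where K: "\<And>\<zeta>. \<zeta> \<in> S2 \<Longrightarrow> hs_norm (A \<zeta>) \<le> K * hs_norm \<zeta>"
    using selfadjoint_on_S2_bounded[OF separable selfadjoint] by blast
  define d where "d N = (\<lambda>y. ?Q N \<eta> y - \<eta> y)" for N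
  have d: "d N \<in> S2" for N
    unfolding d_def by (rule S2_diff[OF separable compress_S2[OF separable assms] assms])
  then have Ad: "A (d N) \<in> S2" for N
    by (rule selfadjoint_on_S2_S2[OF selfadjoint])
  have "A (?Q N \<eta>) = (\<lambda>x. A (d N) x + A \<eta> x)" for N
    using selfadjoint_on_S2_add[OF selfadjoint d assms] unfolding d_def by simp
  then have split: "?Q N (A (?Q N \<eta>)) x - A \<eta> x = ?Q N (A (d N)) x + (?Q N (A \<eta>) x - A \<eta> x)" for N x
    by (simp add: compress_plus)
  have "l2_norm_on hs_basis (\<lambda>x. ?Q N (A (?Q N \<eta>)) x - A \<eta> x)
      \<le> K * l2_norm_on hs_basis (d N) + l2_norm_on hs_basis (\<lambda>x. ?Q N (A \<eta>) x - A \<eta> x)" for N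
  proof -
    have QAd: "l2_summable_on hs_basis (?Q N (A (d N)))"
      "l2_norm_on hs_basis (?Q N (A (d N))) \<le> l2_norm_on hs_basis (A (d N))"
      using Ad[of N] unfolding S2_iff[OF separable]
      by (auto intro: l2_summable_on_compress[OF orthonormal_basis_hs_basis])
    have "l2_summable_on hs_basis (\<lambda>x. ?Q N (A \<eta>) x - A \<eta> x)"
      using selfadjoint_on_S2_S2[OF selfadjoint assms] unfolding S2_iff[OF separable]
      by (auto intro: l2_summable_on_diff l2_summable_on_compress[OF orthonormal_basis_hs_basis])
    then have "l2_norm_on hs_basis (\<lambda>x. ?Q N (A (?Q N \<eta>)) x - A \<eta> x)
        \<le> l2_norm_on hs_basis (?Q N (A (d N))) + l2_norm_on hs_basis (\<lambda>x. ?Q N (A \<eta>) x - A \<eta> x)"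
      unfolding split using l2_summable_on_add(2)[OF QAd(1)] by blast
    also have "l2_norm_on hs_basis (?Q N (A (d N))) \<le> K * l2_norm_on hs_basis (d N)"
      using QAd(2) K[OF d[of N]] hs_norm_S2[OF separable Ad[of N]] hs_norm_S2[OF separable d[of N]]
      by (metis order_trans)
    finally show ?thesis
      by simp
  qed
  then show ?thesis
    using that unfolding d_def by blast
qed

lemma compress_selfadjoint_tendsto:
  assumes "\<eta> \<in> S2"
  shows "(\<lambda>N. l2_norm_on hs_basis (\<lambda>x. compress hs_basis N (A (compress hs_basis N \<eta>)) x - A \<eta> x))
    \<longlonglongrightarrow> 0"
proof -
  let ?Q = "compress (hs_basis :: 'h set)"
  obtain K where bound: "\<And>N. l2_norm_on hs_basis (\<lambda>x. ?Q N (A (?Q N \<eta>)) x - A \<eta> x)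
    \<le> K * l2_norm_on hs_basis (\<lambda>x. ?Q N \<eta> x - \<eta> x) + l2_norm_on hs_basis (\<lambda>x. ?Q N (A \<eta>) x - A \<eta> x)"
    using compress_selfadjoint_error_le[OF assms] by blast
  have "(\<lambda>N. l2_norm_on hs_basis (\<lambda>x. ?Q N \<eta> x - \<eta> x)) \<longlonglongrightarrow> 0"
    "(\<lambda>N. l2_norm_on hs_basis (\<lambda>x. ?Q N (A \<eta>) x - A \<eta> x)) \<longlonglongrightarrow> 0"
    using assms selfadjoint_on_S2_S2[OF selfadjoint assms] unfolding S2_iff[OF separable]
    by (auto intro: compress_tendsto[OF orthonormal_basis_hs_basis countable_hs_basis[OF separable]])
  then have "(\<lambda>N. K * l2_norm_on hs_basis (\<lambda>x. ?Q N \<eta> x - \<eta> x)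
      + l2_norm_on hs_basis (\<lambda>x. ?Q N (A \<eta>) x - A \<eta> x)) \<longlonglongrightarrow> K * 0 + 0"
    by (intro tendsto_add tendsto_mult tendsto_const)
  then have majorant: "(\<lambda>N. K * l2_norm_on hs_basis (\<lambda>x. ?Q N \<eta> x - \<eta> x)
      + l2_norm_on hs_basis (\<lambda>x. ?Q N (A \<eta>) x - A \<eta> x)) \<longlonglongrightarrow> 0"
    by simp
  show ?thesis
    by (rule tendsto_sandwich[OF always_eventually always_eventually tendsto_const majorant])
      (use bound l2_norm_on_nonneg in auto)
qed

end

section \<open>Damped block series\<close>

definition weighted_sum :: "('a \<Rightarrow> 'v::real_vector) \<Rightarrow> (real \<times> 'a) list \<Rightarrow> 'v" where
  "weighted_sum f ts = (\<Sum>(c, t)\<leftarrow>ts. c *\<^sub>R f t)"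

definition damp :: "nat \<Rightarrow> (real \<times> 'a) list \<Rightarrow> (real \<times> 'a) list" where
  "damp M ts = map (\<lambda>(c, t). (c / real M, t)) ts"

text \<open>Block \<open>j\<close> is repeated \<open>M j\<close> times with all weights divided by \<open>M j\<close>: the blocks contribute
  the same total, but every partial sum inside a block stays within \<open>1 / M j\<close> of a convex
  combination of two consecutive block totals.\<close>

definition damped_prefix :: "(nat \<Rightarrow> (real \<times> 'a) list) \<Rightarrow> (nat \<Rightarrow> nat) \<Rightarrow> nat \<Rightarrow> (real \<times> 'a) list" where
  "damped_prefix B M m = concat (map (\<lambda>j. concat (replicate (M j) (damp (M j) (B j)))) [0..<m])"

definition damped_series :: "(nat \<Rightarrow> (real \<times> 'a) list) \<Rightarrow> (nat \<Rightarrow> nat) \<Rightarrow> nat \<Rightarrow> real \<times> 'a" where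
  "damped_series B M n = damped_prefix B M (Suc n) ! n"

lemma weighted_sum_Nil [simp]: "weighted_sum f [] = 0"
  by (simp add: weighted_sum_def)

lemma weighted_sum_append [simp]: "weighted_sum f (xs @ ys) = weighted_sum f xs + weighted_sum f ys"
  by (simp add: weighted_sum_def)

lemma weighted_sum_concat_replicate:
  "weighted_sum f (concat (replicate k ts)) = real k *\<^sub>R weighted_sum f ts"
  by (induction k) (simp_all add: algebra_simps)

lemma weighted_sum_damp: "weighted_sum f (damp M ts) = (1 / real M) *\<^sub>R weighted_sum f ts"
  by (induction ts) (auto simp: weighted_sum_def damp_def scaleR_add_right)

lemma weighted_sum_damped_prefix:
  assumes "\<And>j. M j > 0"
  shows "weighted_sum f (damped_prefix B M m) = (\<Sum>j<m. weighted_sum f (B j))"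
proof (induction m)
  case 0
  then show ?case
    by (simp add: damped_prefix_def)
next
  case (Suc m)
  have "weighted_sum f (concat (replicate (M m) (damp (M m) (B m)))) = weighted_sum f (B m)"
    using assms[of m] by (simp add: weighted_sum_concat_replicate weighted_sum_damp)
  then show ?case
    using Suc by (simp add: damped_prefix_def)
qed

lemma damped_prefix_Suc:
  "damped_prefix B M (Suc m) = damped_prefix B M m @ concat (replicate (M m) (damp (M m) (B m)))"
  by (simp add: damped_prefix_def)

lemma length_damped_prefix_Suc:
  "length (damped_prefix B M (Suc m)) = length (damped_prefix B M m) + M m * length (B m)"
  by (simp add: damped_prefix_Suc length_concat sum_list_replicate damp_def)

lemma damped_prefix_append:
  assumes "m \<le> m'"
  obtains ys where "damped_prefix B M m' = damped_prefix B M m @ ys"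
  using assms
proof (induction m' arbitrary: thesis rule: dec_induct)
  case base
  then show ?case
    by (metis append_Nil2)
next
  case (step m')
  then show ?case
    by (metis append.assoc damped_prefix_Suc)
qed

lemma length_damped_prefix_ge:
  assumes "\<And>j. M j > 0" "\<And>j. B j \<noteq> []"
  shows "m \<le> length (damped_prefix B M m)"
proof (induction m)
  case 0
  then show ?case
    by simp
next
  case (Suc m)
  have "1 \<le> M m * length (B m)"
    using assms[of m] by (metis Suc_leI One_nat_def length_greater_0_conv nat_0_less_mult_iff)
  then show ?case
    using Suc unfolding length_damped_prefix_Suc by linarith
qed

lemma damped_series_eq_nth:
  assumes "\<And>j. M j > 0" "\<And>j. B j \<noteq> []" "n < length (damped_prefix B M m)"
  shows "damped_series B M n = damped_prefix B M m ! n"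
proof (cases "Suc n \<le> m")
  case True
  then obtain ys where "damped_prefix B M m = damped_prefix B M (Suc n) @ ys"
    by (rule damped_prefix_append)
  moreover have "n < length (damped_prefix B M (Suc n))"
    using length_damped_prefix_ge[of M B, OF assms(1,2), of "Suc n"] by simp
  ultimately show ?thesis
    by (simp add: damped_series_def nth_append)
next
  case False
  then have "m \<le> Suc n"
    by simp
  then obtain ys where "damped_prefix B M (Suc n) = damped_prefix B M m @ ys"
    by (rule damped_prefix_append)
  then show ?thesis
    using assms(3) by (simp add: damped_series_def nth_append)
qed

lemma take_concat_replicate:
  assumes "r < length xs" "k < M"
  shows "take (k * length xs + r) (concat (replicate M xs)) = concat (replicate k xs) @ take r xs"
  using assms
proof (induction k arbitrary: M)
  case 0
  then show ?case
    by (cases M) auto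
next
  case (Suc k)
  then obtain M' where "M = Suc M'"
    by (cases M) auto
  then show ?case
    using Suc by (simp add: add.assoc)
qed

lemma damped_prefix_block_index:
  assumes M: "\<And>j. M j > 0" and B: "\<And>j. B j \<noteq> []"
    and N: "length (damped_prefix B M m\<^sub>0) \<le> N"
  obtains m where "m\<^sub>0 \<le> m" "length (damped_prefix B M m) \<le> N" "N < length (damped_prefix B M (Suc m))"
proof -
  let ?len = "\<lambda>m. length (damped_prefix B M m)"
  define m where "m = (LEAST m. N < ?len (Suc m))"
  have "N < ?len (Suc N)"
    using length_damped_prefix_ge[of M B, OF M B, of "Suc N"] by simp
  then have upper: "N < ?len (Suc m)"
    unfolding m_def by (rule LeastI)
  have lower: "?len m \<le> N"
  proof (cases m)
    case 0
    then show ?thesis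
      by (simp add: damped_prefix_def)
  next
    case (Suc k)
    then have "k < m"
      by simp
    then have "\<not> N < ?len (Suc k)"
      unfolding m_def by (rule not_less_Least)
    then show ?thesis
      using Suc by simp
  qed
  have "m\<^sub>0 \<le> m"
  proof (rule ccontr)
    assume "\<not> m\<^sub>0 \<le> m"
    then have "Suc m \<le> m\<^sub>0"
      by simp
    then obtain ys where "damped_prefix B M m\<^sub>0 = damped_prefix B M (Suc m) @ ys"
      by (rule damped_prefix_append)
    then show False
      using upper N by simp
  qed
  with lower upper show ?thesis
    using that by blast
qed

lemma damped_series_initial_segment:
  assumes M: "\<And>j. M j > 0" and B: "\<And>j. B j \<noteq> []"
    and N: "length (damped_prefix B M m\<^sub>0) \<le> N"
  obtains m k r where "m\<^sub>0 \<le> m" "k < M m" "r < length (B m)"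
    and "map (damped_series B M) [0..<N] =
      damped_prefix B M m @ concat (replicate k (damp (M m) (B m))) @ damp (M m) (take r (B m))"
proof -
  obtain m where "m\<^sub>0 \<le> m" and lower: "length (damped_prefix B M m) \<le> N"
    and upper: "N < length (damped_prefix B M (Suc m))"
    using damped_prefix_block_index[OF M B N] .
  define xs where "xs = damp (M m) (B m)"
  define q where "q = N - length (damped_prefix B M m)"
  have "length xs > 0"
    using B[of m] by (simp add: xs_def damp_def)
  have "q < M m * length xs"
    using upper lower unfolding q_def xs_def length_damped_prefix_Suc by (simp add: damp_def)
  define k r where "k = q div length xs" and "r = q mod length xs"
  have "k < M m"
    using \<open>q < M m * length xs\<close> \<open>length xs > 0\<close> by (simp add: k_def div_less_iff_less_mult)
  have "r < length xs"
    using \<open>length xs > 0\<close> by (simp add: r_def)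
  have "map (damped_series B M) [0..<N] = take N (damped_prefix B M (Suc m))"
    using upper by (intro nth_equalityI) (simp_all add: damped_series_eq_nth[of M B, OF M B])
  also have "\<dots> = damped_prefix B M m @ take q (concat (replicate (M m) xs))"
    using lower by (simp add: damped_prefix_Suc q_def xs_def)
  also have "q = k * length xs + r"
    by (simp add: k_def r_def)
  also have "take \<dots> (concat (replicate (M m) xs)) = concat (replicate k xs) @ take r xs"
    using \<open>r < length xs\<close> \<open>k < M m\<close> by (rule take_concat_replicate)
  finally show ?thesis
    using that \<open>m\<^sub>0 \<le> m\<close> \<open>k < M m\<close> \<open>r < length xs\<close>
    by (simp add: xs_def damp_def take_map)
qed

section \<open>Sandwiches by selfadjoint operators of rank two\<close>

type_synonym 'a dyad = "complex \<times> 'a \<times> 'a"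

fun herm_dyad :: "'a::complex_inner dyad \<Rightarrow> 'a \<Rightarrow> 'a" where
  "herm_dyad (\<alpha>, u, v) x = scaleC \<alpha> (rank_one u v x) + scaleC (cnj \<alpha>) (rank_one v u x)"

fun sandwich :: "'a::complex_inner dyad \<times> 'a dyad \<Rightarrow> ('a \<Rightarrow> 'a) \<Rightarrow> 'a \<Rightarrow> 'a" where
  "sandwich (p, q) \<eta> x = herm_dyad p (\<eta> (herm_dyad q x))"

fun sandwich_weight :: "'a dyad \<times> 'a dyad \<Rightarrow> real" where
  "sandwich_weight ((\<alpha>, _), (\<beta>, _)) = 4 * cmod \<alpha> * cmod \<beta>"

fun sandwich_on :: "'a set \<Rightarrow> 'a dyad \<times> 'a dyad \<Rightarrow> bool" where
  "sandwich_on E ((_, u, v), (_, w, z)) \<longleftrightarrow> u \<in> E \<and> v \<in> E \<and> w \<in> E \<and> z \<in> E"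

lemma selfadjoint_op_herm_dyad: "selfadjoint_op (herm_dyad d)"
proof -
  obtain \<alpha> u v where d: "d = (\<alpha>, u, v)"
    by (cases d)
  have "herm_dyad d = (\<lambda>x. scaleC \<alpha> (rank_one u v x) + scaleC (cnj \<alpha>) (rank_one v u x))"
    by (simp add: d fun_eq_iff)
  moreover have "bounded_clinear_op (\<lambda>x. scaleC \<alpha> (rank_one u v x) + scaleC (cnj \<alpha>) (rank_one v u x))"
    by (intro bounded_clinear_op_plus bounded_clinear_op_scaleC_left bounded_clinear_op_rank_one)
  ultimately show ?thesis
    unfolding selfadjoint_op_def
    by (simp add: rank_one_def cinner_add_left cinner_add_right cinner_scaleC_left cinner_scaleC_right
        algebra_simps)
qed

lemma herm_dyad_scale: "herm_dyad (of_real r * \<alpha>, u, v) x = r *\<^sub>R herm_dyad (\<alpha>, u, v) x"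
  by (simp add: scaleR_scaleC scaleC_add_right scaleC_scaleC)

lemma rank_one_scaleC: "rank_one u v (scaleC c x) = scaleC c (rank_one u v x)"
  by (rule bounded_clinear_op_scaleC[OF bounded_clinear_op_rank_one])

lemma rank_one_add: "rank_one u v (x + y) = rank_one u v x + rank_one u v y"
  by (rule bounded_clinear_op_add[OF bounded_clinear_op_rank_one])

lemma sandwich_expand:
  assumes "bounded_clinear_op \<eta>"
  shows "sandwich ((\<alpha>, u, v), (\<beta>, w, z)) \<eta> x =
      scaleC (\<alpha> * \<beta>) (rank_one u v (\<eta> (rank_one w z x)))
    + scaleC (\<alpha> * cnj \<beta>) (rank_one u v (\<eta> (rank_one z w x)))
    + scaleC (cnj \<alpha> * \<beta>) (rank_one v u (\<eta> (rank_one w z x)))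
    + scaleC (cnj \<alpha> * cnj \<beta>) (rank_one v u (\<eta> (rank_one z w x)))"
  by (simp add: bounded_clinear_op_add[OF assms] bounded_clinear_op_scaleC[OF assms] rank_one_add
      rank_one_scaleC scaleC_add_right scaleC_scaleC add_ac)

text \<open>Polarization: the pair of sandwiches below kills the two cross terms of the expansion,
  leaving \<open>2 \<alpha> \<beta> |u\<rangle>\<langle>v| \<eta> |w\<rangle>\<langle>z|\<close> and its mirror image.\<close>

lemma sandwich_polarization:
  assumes "bounded_clinear_op \<eta>"
  shows "sandwich ((\<alpha>, u, v), (\<beta>, w, z)) \<eta> x + sandwich ((- \<i> * \<alpha>, u, v), (\<i> * \<beta>, w, z)) \<eta> x =
    scaleC (2 * \<alpha> * \<beta>) (rank_one u v (\<eta> (rank_one w z x)))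
    + scaleC (2 * cnj \<alpha> * cnj \<beta>) (rank_one v u (\<eta> (rank_one z w x)))"
proof -
  let ?X1 = "rank_one u v (\<eta> (rank_one w z x))" and ?X2 = "rank_one u v (\<eta> (rank_one z w x))"
    and ?X3 = "rank_one v u (\<eta> (rank_one w z x))" and ?X4 = "rank_one v u (\<eta> (rank_one z w x))"
  have "sandwich ((\<alpha>, u, v), (\<beta>, w, z)) \<eta> x + sandwich ((- \<i> * \<alpha>, u, v), (\<i> * \<beta>, w, z)) \<eta> x =
      scaleC (\<alpha> * \<beta> + (- \<i> * \<alpha>) * (\<i> * \<beta>)) ?X1
    + scaleC (\<alpha> * cnj \<beta> + (- \<i> * \<alpha>) * cnj (\<i> * \<beta>)) ?X2
    + scaleC (cnj \<alpha> * \<beta> + cnj (- \<i> * \<alpha>) * (\<i> * \<beta>)) ?X3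
    + scaleC (cnj \<alpha> * cnj \<beta> + cnj (- \<i> * \<alpha>) * cnj (\<i> * \<beta>)) ?X4"
    unfolding sandwich_expand[OF assms] scaleC_add_left by (simp only: add_ac)
  also have "\<alpha> * \<beta> + (- \<i> * \<alpha>) * (\<i> * \<beta>) = 2 * \<alpha> * \<beta>"
    by (simp add: algebra_simps)
  also have "\<alpha> * cnj \<beta> + (- \<i> * \<alpha>) * cnj (\<i> * \<beta>) = 0"
    by (simp add: algebra_simps)
  also have "cnj \<alpha> * \<beta> + cnj (- \<i> * \<alpha>) * (\<i> * \<beta>) = 0"
    by (simp add: algebra_simps)
  also have "cnj \<alpha> * cnj \<beta> + cnj (- \<i> * \<alpha>) * cnj (\<i> * \<beta>) = 2 * cnj \<alpha> * cnj \<beta>"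
    by (simp add: algebra_simps)
  finally show ?thesis
    by simp
qed

lemma l2_rank_one_sandwich:
  fixes E :: "'a::chilbert_space set"
  assumes onb: "orthonormal_basis E" "countable E"
    and op: "bounded_clinear_op \<eta>" and summable: "l2_summable_on E \<eta>"
    and "a \<in> E" "b \<in> E" "c \<in> E" "d \<in> E"
  shows "l2_summable_on E (\<lambda>x. scaleC \<gamma> (rank_one a b (\<eta> (rank_one c d x))))"
    and "l2_norm_on E (\<lambda>x. scaleC \<gamma> (rank_one a b (\<eta> (rank_one c d x)))) \<le> cmod \<gamma> * l2_norm_on E \<eta>"
proof -
  \<comment> \<open>the sandwich is again of rank one: \<open>|a\<rangle>\<langle>b| \<eta> |c\<rangle>\<langle>d| = |a\<langle>b, \<eta> c\<rangle>\<rangle>\<langle>d|\<close>\<close>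
  have eq: "rank_one a b (\<eta> (rank_one c d x)) = rank_one (rank_one a b (\<eta> c)) d x" for x
    by (simp add: rank_one_def bounded_clinear_op_scaleC[OF op] rank_one_scaleC[unfolded rank_one_def])
  have "norm (rank_one a b (\<eta> c)) \<le> norm b * norm (\<eta> c) * norm a"
    unfolding rank_one_def using mult_right_mono[OF complex_cauchy_schwarz[of b "\<eta> c"]] by simp
  also have "\<dots> \<le> l2_norm_on E \<eta>"
    using onb_norm[OF onb(1)] assms(5-7) norm_le_l2_norm_on[OF summable \<open>c \<in> E\<close>] by simp
  finally have "l2_norm_on E (rank_one (rank_one a b (\<eta> c)) d) \<le> l2_norm_on E \<eta>"
    using l2_summable_on_rank_one(2)[OF onb] onb_norm[OF onb(1) \<open>d \<in> E\<close>] by simp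
  then show "l2_summable_on E (\<lambda>x. scaleC \<gamma> (rank_one a b (\<eta> (rank_one c d x))))"
    and "l2_norm_on E (\<lambda>x. scaleC \<gamma> (rank_one a b (\<eta> (rank_one c d x)))) \<le> cmod \<gamma> * l2_norm_on E \<eta>"
    using l2_summable_on_scaleC[OF l2_summable_on_rank_one(1)[OF onb, of "rank_one a b (\<eta> c)" d],
        where c = \<gamma>]
    unfolding eq by (simp_all add: mult_left_mono)
qed

lemma l2_sandwich:
  fixes E :: "'a::chilbert_space set"
  assumes onb: "orthonormal_basis E" "countable E"
    and op: "bounded_clinear_op \<eta>" and summable: "l2_summable_on E \<eta>" and "sandwich_on E s"
  shows "l2_summable_on E (sandwich s \<eta>)" "l2_norm_on E (sandwich s \<eta>) \<le> sandwich_weight s * l2_norm_on E \<eta>"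
proof -
  obtain \<alpha> u v \<beta> w z where s: "s = ((\<alpha>, u, v), (\<beta>, w, z))"
    by (metis prod.collapse)
  have uvwz: "u \<in> E" "v \<in> E" "w \<in> E" "z \<in> E"
    using \<open>sandwich_on E s\<close> by (simp_all add: s)
  note rank_one_term = l2_rank_one_sandwich[OF onb op summable]
  let ?t1 = "\<lambda>x. scaleC (\<alpha> * \<beta>) (rank_one u v (\<eta> (rank_one w z x)))"
    and ?t2 = "\<lambda>x. scaleC (\<alpha> * cnj \<beta>) (rank_one u v (\<eta> (rank_one z w x)))"
    and ?t3 = "\<lambda>x. scaleC (cnj \<alpha> * \<beta>) (rank_one v u (\<eta> (rank_one w z x)))"
    and ?t4 = "\<lambda>x. scaleC (cnj \<alpha> * cnj \<beta>) (rank_one v u (\<eta> (rank_one z w x)))"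
  have t: "l2_summable_on E ?t1" "l2_norm_on E ?t1 \<le> cmod \<alpha> * cmod \<beta> * l2_norm_on E \<eta>"
    "l2_summable_on E ?t2" "l2_norm_on E ?t2 \<le> cmod \<alpha> * cmod \<beta> * l2_norm_on E \<eta>"
    "l2_summable_on E ?t3" "l2_norm_on E ?t3 \<le> cmod \<alpha> * cmod \<beta> * l2_norm_on E \<eta>"
    "l2_summable_on E ?t4" "l2_norm_on E ?t4 \<le> cmod \<alpha> * cmod \<beta> * l2_norm_on E \<eta>"
    using rank_one_term[OF uvwz(1,2,3,4), where \<gamma> = "\<alpha> * \<beta>"]
      rank_one_term[OF uvwz(1,2,4,3), where \<gamma> = "\<alpha> * cnj \<beta>"]
      rank_one_term[OF uvwz(2,1,3,4), where \<gamma> = "cnj \<alpha> * \<beta>"]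
      rank_one_term[OF uvwz(2,1,4,3), where \<gamma> = "cnj \<alpha> * cnj \<beta>"]
    by (simp_all add: norm_mult)
  have "sandwich s \<eta> = (\<lambda>x. ?t1 x + ?t2 x + ?t3 x + ?t4 x)"
    unfolding s by (rule ext, rule sandwich_expand[OF op])
  moreover note l2_summable_on_add[OF l2_summable_on_add(1)[OF l2_summable_on_add(1)[OF t(1,3)] t(5)] t(7)]
    l2_summable_on_add(2)[OF l2_summable_on_add(1)[OF t(1,3)] t(5)] l2_summable_on_add(2)[OF t(1,3)]
  ultimately show "l2_summable_on E (sandwich s \<eta>)"
    and "l2_norm_on E (sandwich s \<eta>) \<le> sandwich_weight s * l2_norm_on E \<eta>"
    using t(2,4,6,8) by (simp_all add: s)
qed

definition weighted_total :: "(real \<times> 'a dyad \<times> 'a dyad) list \<Rightarrow> real" where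
  "weighted_total ts = (\<Sum>(c, s)\<leftarrow>ts. \<bar>c\<bar> * sandwich_weight s)"

lemma sandwich_weight_nonneg: "sandwich_weight s \<ge> 0"
proof -
  obtain \<alpha> u v \<beta> w z where "s = ((\<alpha>, u, v), (\<beta>, w, z))"
    by (metis prod.collapse)
  then show ?thesis
    by simp
qed

lemma weighted_total_append: "weighted_total (xs @ ys) = weighted_total xs + weighted_total ys"
  by (simp add: weighted_total_def)

lemma weighted_total_nonneg: "weighted_total ts \<ge> 0"
  unfolding weighted_total_def
  by (induction ts) (auto simp: sandwich_weight_nonneg)

lemma weighted_total_take: "weighted_total (take r ts) \<le> weighted_total ts"
  using weighted_total_append[of "take r ts" "drop r ts"] weighted_total_nonneg[of "drop r ts"]
  by simp

lemma l2_weighted_sum_sandwich: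
  fixes E :: "'a::chilbert_space set"
  assumes onb: "orthonormal_basis E" "countable E"
    and op: "bounded_clinear_op \<eta>" and summable: "l2_summable_on E \<eta>"
    and "\<forall>(c, s)\<in>set ts. sandwich_on E s"
  shows "l2_summable_on E (\<lambda>x. weighted_sum (\<lambda>s. sandwich s \<eta> x) ts)"
    and "l2_norm_on E (\<lambda>x. weighted_sum (\<lambda>s. sandwich s \<eta> x) ts) \<le> weighted_total ts * l2_norm_on E \<eta>"
proof -
  have "l2_summable_on E (\<lambda>x. weighted_sum (\<lambda>s. sandwich s \<eta> x) ts) \<and>
    l2_norm_on E (\<lambda>x. weighted_sum (\<lambda>s. sandwich s \<eta> x) ts) \<le> weighted_total ts * l2_norm_on E \<eta>"
    using assms(5)
  proof (induction ts)
    case Nil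
    then show ?case
      by (simp add: weighted_total_def l2_summable_on_0)
  next
    case (Cons cs ts)
    obtain c s where cs: "cs = (c, s)"
      by (cases cs)
    have "sandwich_on E s"
      using Cons.prems by (simp add: cs)
    note l2_s = l2_sandwich[OF onb op summable this]
    have s: "l2_summable_on E (\<lambda>x. scaleC (of_real c) (sandwich s \<eta> x))"
      "l2_norm_on E (\<lambda>x. scaleC (of_real c) (sandwich s \<eta> x)) \<le> \<bar>c\<bar> * sandwich_weight s * l2_norm_on E \<eta>"
      using l2_summable_on_scaleC[OF l2_s(1), of "of_real c"] mult_left_mono[OF l2_s(2), of "\<bar>c\<bar>"]
      by (simp_all add: mult.assoc)
    have IH: "l2_summable_on E (\<lambda>x. weighted_sum (\<lambda>s. sandwich s \<eta> x) ts)"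
      "l2_norm_on E (\<lambda>x. weighted_sum (\<lambda>s. sandwich s \<eta> x) ts) \<le> weighted_total ts * l2_norm_on E \<eta>"
      using Cons.IH Cons.prems by simp_all
    have "weighted_sum (\<lambda>s. sandwich s \<eta> x) (cs # ts) =
        scaleC (of_real c) (sandwich s \<eta> x) + weighted_sum (\<lambda>s. sandwich s \<eta> x) ts" for x
      by (simp add: cs weighted_sum_def scaleR_scaleC)
    then show ?case
      using l2_summable_on_add[OF s(1) IH(1)] s(2) IH(2)
      by (simp add: cs weighted_total_def distrib_right)
  qed
  then show "l2_summable_on E (\<lambda>x. weighted_sum (\<lambda>s. sandwich s \<eta> x) ts)"
    and "l2_norm_on E (\<lambda>x. weighted_sum (\<lambda>s. sandwich s \<eta> x) ts) \<le> weighted_total ts * l2_norm_on E \<eta>"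
    by simp_all
qed

section \<open>Compressions of \<open>A\<close> as sums of selfadjoint sandwiches\<close>

definition hs_coeff :: "(('a::complex_inner \<Rightarrow> 'a) \<Rightarrow> 'a \<Rightarrow> 'a) \<Rightarrow> 'a \<Rightarrow> 'a \<Rightarrow> 'a \<Rightarrow> 'a \<Rightarrow> complex" where
  "hs_coeff A i j k l = hs_inner (rank_one i j) (A (rank_one k l))"

definition basis_quadruples :: "nat \<Rightarrow> (('a::complex_inner \<times> 'a) \<times> ('a \<times> 'a)) set" where
  "basis_quadruples N =
    (basis_prefix hs_basis N \<times> basis_prefix hs_basis N) \<times> (basis_prefix hs_basis N \<times> basis_prefix hs_basis N)"

lemma finite_basis_quadruples [simp]: "finite (basis_quadruples N)"
  by (simp add: basis_quadruples_def)

definition enum_finite :: "'a set \<Rightarrow> 'a list" where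
  "enum_finite S = (SOME xs. set xs = S \<and> distinct xs)"

lemma enum_finite:
  assumes "finite S"
  shows "set (enum_finite S) = S" "distinct (enum_finite S)"
  using someI_ex[OF finite_distinct_list[OF assms]] unfolding enum_finite_def by simp_all

text \<open>Each quadruple \<open>((i, j), (k, l))\<close> contributes the two sandwiches of
  \<open>sandwich_polarization\<close> with \<open>\<alpha> = hs_coeff A i j k l / 4\<close>, \<open>\<beta> = 1\<close>.\<close>

definition compression_terms ::
    "(('a::complex_inner \<Rightarrow> 'a) \<Rightarrow> 'a \<Rightarrow> 'a) \<Rightarrow> nat \<Rightarrow> (real \<times> 'a dyad \<times> 'a dyad) list" where
  "compression_terms A N = concat (map (\<lambda>((i, j), (k, l)). let c = hs_coeff A i j k l / 4 in
      [(1, (c, i, k), (1, l, j)), (1, (- \<i> * c, i, k), (\<i>, l, j))]) (enum_finite (basis_quadruples N)))"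

lemma sandwich_on_compression_terms:
  assumes "(c, s) \<in> set (compression_terms A N)"
  shows "sandwich_on hs_basis s"
proof -
  obtain i j k l \<alpha> \<beta> where "((i, j), (k, l)) \<in> basis_quadruples N" and "s = ((\<alpha>, i, k), (\<beta>, l, j))"
    using assms enum_finite(1)[OF finite_basis_quadruples, of N]
    unfolding compression_terms_def by (fastforce simp: Let_def)
  then show ?thesis
    using basis_prefix_subset[of hs_basis N] by (auto simp: basis_quadruples_def)
qed

lemma weighted_sum_concat: "weighted_sum f (concat tss) = (\<Sum>ts\<leftarrow>tss. weighted_sum f ts)"
  by (induction tss) simp_all

context
  fixes A :: "('h::chilbert_space \<Rightarrow> 'h) \<Rightarrow> 'h \<Rightarrow> 'h"
  assumes separable: "separable_space TYPE('h)" and selfadjoint: "selfadjoint_on_S2 A"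
begin

lemma hs_coeff_swap: "hs_coeff A k l i j = cnj (hs_coeff A i j k l)"
  unfolding hs_coeff_def
  using selfadjoint_on_S2_hs_inner[OF selfadjoint S2_rank_one[OF separable] S2_rank_one[OF separable]]
  by (metis hs_inner_commute)

lemma compress_compress_expand:
  assumes "\<eta> \<in> S2"
  shows "compress hs_basis N (A (compress hs_basis N \<eta>)) x =
    (\<Sum>((i, j), (k, l))\<in>basis_quadruples N. scaleC (hs_coeff A i j k l) (rank_one i k (\<eta> (rank_one l j x))))"
proof -
  let ?P = "basis_prefix (hs_basis :: 'h set) N"
  have op: "bounded_clinear_op \<eta>"
    using assms S2_iff[OF separable] by blast
  have compress: "compress hs_basis N \<eta> = (\<lambda>x. \<Sum>(k, l)\<in>?P \<times> ?P. scaleC (cinner k (\<eta> l)) (rank_one k l x))"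
    using compress_eq_sum_rank_one[OF op] by (simp add: fun_eq_iff)
  have "A (compress hs_basis N \<eta>) = (\<lambda>x. \<Sum>(k, l)\<in>?P \<times> ?P. scaleC (cinner k (\<eta> l)) (A (rank_one k l) x))"
    unfolding compress using selfadjoint_on_S2_sum[OF separable selfadjoint, of "?P \<times> ?P"
        "\<lambda>(k, l). rank_one k l" "\<lambda>(k, l). cinner k (\<eta> l)"]
    by (simp add: S2_rank_one[OF separable] case_prod_beta)
  moreover have "A (compress hs_basis N \<eta>) \<in> S2"
    using selfadjoint_on_S2_S2[OF selfadjoint compress_S2[OF separable assms]] .
  then have "bounded_clinear_op (A (compress hs_basis N \<eta>))"
    using S2_iff[OF separable] by blast
  ultimately have "compress hs_basis N (A (compress hs_basis N \<eta>)) x =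
      (\<Sum>(i, j)\<in>?P \<times> ?P. \<Sum>(k, l)\<in>?P \<times> ?P.
        scaleC (cinner i (scaleC (cinner k (\<eta> l)) (A (rank_one k l) j))) (rank_one i j x))"
    using compress_eq_sum_rank_one[of "A (compress hs_basis N \<eta>)" hs_basis N x]
    by (simp add: cinner_sum_right case_prod_beta scaleC_sum_left)
  also have "\<dots> = (\<Sum>(i, j)\<in>?P \<times> ?P. \<Sum>(k, l)\<in>?P \<times> ?P.
      scaleC (hs_coeff A i j k l) (rank_one i k (\<eta> (rank_one l j x))))"
    by (intro sum.cong refl) (auto simp: hs_coeff_def hs_inner_rank_one rank_one_def cinner_scaleC_right
        bounded_clinear_op_scaleC[OF op] scaleC_scaleC mult_ac basis_prefix_subset[THEN subsetD])
  finally show ?thesis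
    unfolding basis_quadruples_def by (simp add: sum.cartesian_product case_prod_beta)
qed

lemma weighted_sum_compression_terms:
  assumes "\<eta> \<in> S2"
  shows "weighted_sum (\<lambda>s. sandwich s \<eta> x) (compression_terms A N) =
    compress hs_basis N (A (compress hs_basis N \<eta>)) x"
proof -
  let ?Q = "basis_quadruples N :: (('h \<times> 'h) \<times> ('h \<times> 'h)) set"
  define g where "g = (\<lambda>((i, j), (k, l)). scaleC (hs_coeff A i j k l / 2) (rank_one i k (\<eta> (rank_one l j x))))"
  have op: "bounded_clinear_op \<eta>"
    using assms S2_iff[OF separable] by blast
  have pair: "weighted_sum (\<lambda>s. sandwich s \<eta> x) (let c = hs_coeff A i j k l / 4 in
      [(1, (c, i, k), (1, l, j)), (1, (- \<i> * c, i, k), (\<i>, l, j))]) = g ((i, j), (k, l)) + g ((k, l), (i, j))"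
    for i j k l
    using sandwich_polarization[OF op, of "hs_coeff A i j k l / 4" i k 1 l j x] hs_coeff_swap[of k l i j]
    by (simp add: weighted_sum_def Let_def g_def scaleR_scaleC scaleC_one)
  have "weighted_sum (\<lambda>s. sandwich s \<eta> x) (compression_terms A N) = (\<Sum>t\<in>?Q. g t + g (prod.swap t))"
    unfolding compression_terms_def weighted_sum_concat map_map
    using enum_finite[of ?Q] pair
    by (simp add: sum_list_distinct_conv_sum_set case_prod_beta o_def prod.swap_def)
  also have "\<dots> = (\<Sum>t\<in>?Q. g t) + (\<Sum>t\<in>?Q. g t)"
    using sum.reindex[OF inj_swap, of g ?Q] by (simp add: sum.distrib basis_quadruples_def product_swap)
  also have "\<dots> = compress hs_basis N (A (compress hs_basis N \<eta>)) x"
    unfolding compress_compress_expand[OF assms] sum.distrib[symmetric]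
    by (intro sum.cong refl) (auto simp: g_def scaleC_add_left[symmetric])
  finally show ?thesis .
qed

end

definition compression_block ::
    "(('a::complex_inner \<Rightarrow> 'a) \<Rightarrow> 'a \<Rightarrow> 'a) \<Rightarrow> nat \<Rightarrow> (real \<times> 'a dyad \<times> 'a dyad) list" where
  "compression_block A m = compression_terms A (Suc m) @ map (\<lambda>(c, s). (- c, s)) (compression_terms A m)"

definition block_multiplicity :: "(('a::complex_inner \<Rightarrow> 'a) \<Rightarrow> 'a \<Rightarrow> 'a) \<Rightarrow> nat \<Rightarrow> nat" where
  "block_multiplicity A m = Suc m * (nat \<lceil>weighted_total (compression_block A m)\<rceil> + 1)"

lemma block_multiplicity_pos: "block_multiplicity A m > 0"
  by (simp add: block_multiplicity_def)

lemma weighted_total_compression_block_le: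
  "weighted_total (compression_block A m) / real (block_multiplicity A m) \<le> 1 / real (Suc m)"
proof -
  let ?W = "weighted_total (compression_block A m)"
  let ?n = "real (nat \<lceil>?W\<rceil>) + 1"
  have "?W / ?n \<le> 1"
    using real_nat_ceiling_ge[of ?W] by (simp add: pos_divide_le_eq)
  then have "?W / ?n / real (Suc m) \<le> 1 / real (Suc m)"
    by (rule divide_right_mono) simp
  moreover have "real (block_multiplicity A m) = ?n * real (Suc m)"
    by (simp add: block_multiplicity_def algebra_simps)
  ultimately show ?thesis
    by (simp only: divide_divide_eq_left)
qed

lemma length_compression_terms:
  fixes A :: "('a::complex_inner \<Rightarrow> 'a) \<Rightarrow> 'a \<Rightarrow> 'a"
  shows "length (compression_terms A N) = 2 * card (basis_quadruples N :: (('a \<times> 'a) \<times> ('a \<times> 'a)) set)"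
proof -
  let ?Q = "basis_quadruples N :: (('a \<times> 'a) \<times> ('a \<times> 'a)) set"
  have "length (enum_finite ?Q) = card ?Q"
    using distinct_card[OF enum_finite(2)[of ?Q]] enum_finite(1)[of ?Q] by simp
  then show ?thesis
    by (simp add: compression_terms_def length_concat Let_def case_prod_beta o_def sum_list_triv)
qed

lemma compression_block_nonempty:
  assumes "(hs_basis :: 'a::complex_inner set) \<noteq> {}"
  shows "compression_block (A :: ('a \<Rightarrow> 'a) \<Rightarrow> 'a \<Rightarrow> 'a) m \<noteq> []"
proof -
  let ?e = "from_nat_into (hs_basis :: 'a set) 0"
  have "?e \<in> basis_prefix hs_basis (Suc m)"
    using from_nat_into[OF assms] unfolding basis_prefix_def by auto
  then have "basis_quadruples (Suc m) \<noteq> ({} :: (('a \<times> 'a) \<times> ('a \<times> 'a)) set)"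
    by (auto simp: basis_quadruples_def)
  then have "card (basis_quadruples (Suc m) :: (('a \<times> 'a) \<times> ('a \<times> 'a)) set) > 0"
    by (simp add: card_gt_0_iff)
  then have "compression_terms A (Suc m) \<noteq> []"
    using length_compression_terms[of A "Suc m"] by auto
  then show ?thesis
    by (simp add: compression_block_def)
qed

lemma sandwich_on_compression_block: "\<forall>(c, s)\<in>set (compression_block A m). sandwich_on hs_basis s"
proof -
  have "\<forall>(c, s)\<in>set (compression_terms A N). sandwich_on hs_basis s" for N
    using sandwich_on_compression_terms by blast
  then show ?thesis
    unfolding compression_block_def by (auto simp del: sandwich_on.simps)
qed

lemma weighted_sum_negate: "weighted_sum f (map (\<lambda>(c, s). (- c, s)) ts) = - weighted_sum f ts"
  by (induction ts) (auto simp: weighted_sum_def)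

context
  fixes A :: "('h::chilbert_space \<Rightarrow> 'h) \<Rightarrow> 'h \<Rightarrow> 'h" and \<eta> :: "'h \<Rightarrow> 'h"
  assumes separable: "separable_space TYPE('h)" and selfadjoint: "selfadjoint_on_S2 A"
    and \<eta>: "\<eta> \<in> S2" and nontrivial: "(hs_basis :: 'h set) \<noteq> {}"
begin

definition compression_residual :: "nat \<Rightarrow> 'h \<Rightarrow> 'h" where
  "compression_residual j x = compress hs_basis j (A (compress hs_basis j \<eta>)) x - A \<eta> x"

definition compression_error :: "nat \<Rightarrow> real" where
  "compression_error j = l2_norm_on hs_basis (compression_residual j)"

abbreviation damped_sum :: "nat \<Rightarrow> 'h \<Rightarrow> 'h" where
  "damped_sum N x \<equiv>
    weighted_sum (\<lambda>s. sandwich s \<eta> x) (map (damped_series (compression_block A) (block_multiplicity A)) [0..<N])"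

lemma compression_error_tendsto: "compression_error \<longlonglongrightarrow> 0"
  unfolding compression_error_def compression_residual_def
  by (rule compress_selfadjoint_tendsto[OF separable selfadjoint \<eta>])

lemma l2_summable_on_compression_residual: "l2_summable_on hs_basis (compression_residual j)"
proof -
  have "compression_residual j \<in> S2"
    unfolding compression_residual_def
    by (intro S2_diff[OF separable] compress_S2[OF separable] selfadjoint_on_S2_S2[OF selfadjoint] \<eta>)
  then show ?thesis
    unfolding S2_iff[OF separable] by simp
qed

lemma weighted_sum_compression_block:
  "weighted_sum (\<lambda>s. sandwich s \<eta> x) (compression_block A j) =
    compression_residual (Suc j) x - compression_residual j x"
  unfolding compression_block_def compression_residual_def
  by (simp add: weighted_sum_negate weighted_sum_compression_terms[OF separable selfadjoint \<eta>])

lemma damped_sum_decomposition: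
  assumes "length (damped_prefix (compression_block A) (block_multiplicity A) m\<^sub>0) \<le> N"
  obtains m \<theta> r where "m\<^sub>0 \<le> m" "0 \<le> \<theta>" "\<theta> \<le> 1"
    and "\<And>x. damped_sum N x - A \<eta> x =
      (compression_residual m x + scaleC (of_real \<theta>) (compression_residual (Suc m) x - compression_residual m x))
      + scaleC (of_real (1 / real (block_multiplicity A m)))
          (weighted_sum (\<lambda>s. sandwich s \<eta> x) (take r (compression_block A m)))"
proof -
  let ?B = "compression_block A" and ?M = "block_multiplicity A" and ?D = compression_residual
  obtain m k r where "m\<^sub>0 \<le> m" "k < ?M m"
    and segment: "map (damped_series ?B ?M) [0..<N] =
      damped_prefix ?B ?M m @ concat (replicate k (damp (?M m) (?B m))) @ damp (?M m) (take r (?B m))"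
    using damped_series_initial_segment[of ?M ?B, OF block_multiplicity_pos
        compression_block_nonempty[OF nontrivial] assms]
    by blast
  have telescope: "(\<Sum>j<m. ?D (Suc j) x - ?D j x) = ?D m x + A \<eta> x" for x
    using sum_lessThan_telescope[of "\<lambda>j. ?D j x" m] by (simp add: compression_residual_def)
  have "damped_sum N x - A \<eta> x = ?D m x + (real k / real (?M m)) *\<^sub>R (?D (Suc m) x - ?D m x)
      + (1 / real (?M m)) *\<^sub>R weighted_sum (\<lambda>s. sandwich s \<eta> x) (take r (?B m))" for x
    using block_multiplicity_pos[of A]
    by (simp add: segment weighted_sum_damped_prefix weighted_sum_concat_replicate weighted_sum_damp
        weighted_sum_compression_block telescope)
  then show ?thesis
    using that[OF \<open>m\<^sub>0 \<le> m\<close>, of "real k / real (?M m)" r] \<open>k < ?M m\<close>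
    by (simp add: scaleR_scaleC)
qed

lemma l2_damped_remainder:
  shows "l2_summable_on hs_basis (\<lambda>x. scaleC (of_real (1 / real (block_multiplicity A m)))
      (weighted_sum (\<lambda>s. sandwich s \<eta> x) (take r (compression_block A m))))"
    and "l2_norm_on hs_basis (\<lambda>x. scaleC (of_real (1 / real (block_multiplicity A m)))
      (weighted_sum (\<lambda>s. sandwich s \<eta> x) (take r (compression_block A m))))
      \<le> l2_norm_on hs_basis \<eta> / real (Suc m)"
proof -
  let ?B = "compression_block A" and ?M = "block_multiplicity A"
  define R where "R x = weighted_sum (\<lambda>s. sandwich s \<eta> x) (take r (?B m))" for x
  have "l2_summable_on hs_basis \<eta>" "bounded_clinear_op \<eta>"
    using \<eta> S2_iff[OF separable] by auto
  moreover have "\<forall>(c, s)\<in>set (take r (?B m)). sandwich_on hs_basis s"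
    using sandwich_on_compression_block[of A m] set_take_subset[of r "?B m"] by blast
  ultimately have R: "l2_summable_on hs_basis R"
    "l2_norm_on hs_basis R \<le> weighted_total (take r (?B m)) * l2_norm_on hs_basis \<eta>"
    using l2_weighted_sum_sandwich[OF orthonormal_basis_hs_basis countable_hs_basis[OF separable]]
    unfolding R_def by blast+
  show "l2_summable_on hs_basis (\<lambda>x. scaleC (of_real (1 / real (?M m))) (weighted_sum (\<lambda>s. sandwich s \<eta> x) (take r (?B m))))"
    using l2_summable_on_scaleC(1)[OF R(1)] unfolding R_def .
  have "l2_norm_on hs_basis (\<lambda>x. scaleC (of_real (1 / real (?M m))) (R x)) = l2_norm_on hs_basis R / real (?M m)"
    using l2_summable_on_scaleC(2)[OF R(1)] by (simp add: norm_divide)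
  also have "\<dots> \<le> weighted_total (?B m) * l2_norm_on hs_basis \<eta> / real (?M m)"
  proof (rule divide_right_mono)
    show "l2_norm_on hs_basis R \<le> weighted_total (?B m) * l2_norm_on hs_basis \<eta>"
      using R(2) mult_right_mono[OF weighted_total_take[of r "?B m"] l2_norm_on_nonneg[of hs_basis \<eta>]]
      by linarith
  qed simp
  also have "\<dots> \<le> l2_norm_on hs_basis \<eta> / real (Suc m)"
    using mult_right_mono[OF weighted_total_compression_block_le l2_norm_on_nonneg, of A m hs_basis \<eta>]
    by simp
  finally show "l2_norm_on hs_basis (\<lambda>x. scaleC (of_real (1 / real (?M m)))
      (weighted_sum (\<lambda>s. sandwich s \<eta> x) (take r (?B m)))) \<le> l2_norm_on hs_basis \<eta> / real (Suc m)"
    unfolding R_def .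
qed

lemma damped_sum_estimate:
  assumes "length (damped_prefix (compression_block A) (block_multiplicity A) m\<^sub>0) \<le> N"
  obtains m where "m\<^sub>0 \<le> m" and "l2_summable_on hs_basis (\<lambda>x. damped_sum N x - A \<eta> x)"
    and "l2_norm_on hs_basis (\<lambda>x. damped_sum N x - A \<eta> x)
      \<le> 2 * compression_error m + compression_error (Suc m) + l2_norm_on hs_basis \<eta> / real (Suc m)"
proof -
  obtain m \<theta> r where "m\<^sub>0 \<le> m" "0 \<le> \<theta>" "\<theta> \<le> 1" and decomposition: "\<And>x. damped_sum N x - A \<eta> x =
      (compression_residual m x + scaleC (of_real \<theta>) (compression_residual (Suc m) x - compression_residual m x))
      + scaleC (of_real (1 / real (block_multiplicity A m)))
          (weighted_sum (\<lambda>s. sandwich s \<eta> x) (take r (compression_block A m)))"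
    using damped_sum_decomposition[OF assms] by blast
  note step = l2_summable_on_convex_step[OF l2_summable_on_compression_residual
      l2_summable_on_compression_residual \<open>0 \<le> \<theta>\<close> \<open>\<theta> \<le> 1\<close>, of m "Suc m"]
  note sum = l2_summable_on_add[OF step(1) l2_damped_remainder(1)[of m r]]
  show ?thesis
  proof (rule that[OF \<open>m\<^sub>0 \<le> m\<close>])
    show "l2_summable_on hs_basis (\<lambda>x. damped_sum N x - A \<eta> x)"
      unfolding decomposition by (rule sum(1))
    show "l2_norm_on hs_basis (\<lambda>x. damped_sum N x - A \<eta> x)
      \<le> 2 * compression_error m + compression_error (Suc m) + l2_norm_on hs_basis \<eta> / real (Suc m)"
      unfolding decomposition compression_error_def
      using sum(2) step(2) l2_damped_remainder(2)[of m r] by linarith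
  qed
qed

lemma damped_sum_tendsto: "(\<lambda>N. hs_norm (\<lambda>x. damped_sum N x - A \<eta> x)) \<longlonglongrightarrow> 0"
proof (rule LIMSEQ_I)
  fix \<epsilon> :: real
  assume "\<epsilon> > 0"
  define g where "g m = 2 * compression_error m + compression_error (Suc m) + l2_norm_on hs_basis \<eta> / real (Suc m)" for m
  have "g \<longlonglongrightarrow> 2 * 0 + 0 + 0"
    unfolding g_def using compression_error_tendsto
    by (intro tendsto_add tendsto_mult tendsto_const LIMSEQ_Suc[OF lim_const_over_n])
      (auto intro: LIMSEQ_Suc)
  then obtain m\<^sub>0 where "\<forall>m\<ge>m\<^sub>0. norm (g m - 0) < \<epsilon>"
    using LIMSEQ_D[of g 0 \<epsilon>] \<open>\<epsilon> > 0\<close> by auto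
  then have m\<^sub>0: "g m < \<epsilon>" if "m \<ge> m\<^sub>0" for m
    using that by auto
  have "norm (hs_norm (\<lambda>x. damped_sum N x - A \<eta> x) - 0) < \<epsilon>"
    if N: "N \<ge> length (damped_prefix (compression_block A) (block_multiplicity A) m\<^sub>0)" for N
  proof -
    obtain m where "m\<^sub>0 \<le> m" and summable: "l2_summable_on hs_basis (\<lambda>x. damped_sum N x - A \<eta> x)"
      and "l2_norm_on hs_basis (\<lambda>x. damped_sum N x - A \<eta> x) \<le> g m"
      unfolding g_def by (rule damped_sum_estimate[OF N])
    then show ?thesis
      using m\<^sub>0[OF \<open>m\<^sub>0 \<le> m\<close>] hs_norm_eq_l2_norm_on[OF summable]
        l2_norm_on_nonneg[of hs_basis "\<lambda>x. damped_sum N x - A \<eta> x"]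
      by simp
  qed
  then show "\<exists>N\<^sub>0. \<forall>N\<ge>N\<^sub>0. norm (hs_norm (\<lambda>x. damped_sum N x - A \<eta> x) - 0) < \<epsilon>"
    by blast
qed

end

definition left_factor :: "(('a::complex_inner \<Rightarrow> 'a) \<Rightarrow> 'a \<Rightarrow> 'a) \<Rightarrow> nat \<Rightarrow> 'a \<Rightarrow> 'a" where
  "left_factor A n = (case damped_series (compression_block A) (block_multiplicity A) n of
    (c, (\<alpha>, u, v), _) \<Rightarrow> herm_dyad (of_real c * \<alpha>, u, v))"

definition right_factor :: "(('a::complex_inner \<Rightarrow> 'a) \<Rightarrow> 'a \<Rightarrow> 'a) \<Rightarrow> nat \<Rightarrow> 'a \<Rightarrow> 'a" where
  "right_factor A n = herm_dyad (snd (snd (damped_series (compression_block A) (block_multiplicity A) n)))"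

lemma selfadjoint_op_factors: "selfadjoint_op (left_factor A n)" "selfadjoint_op (right_factor A n)"
  unfolding left_factor_def right_factor_def by (simp_all add: selfadjoint_op_herm_dyad split: prod.split)

lemma sum_factors_eq_damped_sum:
  "(\<Sum>n<N. left_factor A n (\<eta> (right_factor A n x))) =
    weighted_sum (\<lambda>s. sandwich s \<eta> x) (map (damped_series (compression_block A) (block_multiplicity A)) [0..<N])"
proof -
  have "left_factor A n (\<eta> (right_factor A n x)) =
      (\<lambda>(c, s). c *\<^sub>R sandwich s \<eta> x) (damped_series (compression_block A) (block_multiplicity A) n)" for n
  proof -
    obtain c \<alpha> u v q where "damped_series (compression_block A) (block_multiplicity A) n = (c, (\<alpha>, u, v), q)"
      by (metis prod.collapse)
    then show ?thesis
      by (simp add: left_factor_def right_factor_def herm_dyad_scale del: herm_dyad.simps)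
  qed
  then show ?thesis
    by (simp add: weighted_sum_def interv_sum_list_conv_sum_set_nat atLeast0LessThan)
qed

lemma hs_norm_trivial: "(hs_basis :: 'a::complex_inner set) = {} \<Longrightarrow> hs_norm (f :: 'a \<Rightarrow> 'a) = 0"
  unfolding hs_norm_def hs_inner_def hs_basis_def[symmetric] by simp

theorem theorem3p9:
  fixes A :: "('h::chilbert_space \<Rightarrow> 'h) \<Rightarrow> ('h \<Rightarrow> 'h)"
  assumes "separable_space TYPE('h)"
    and "selfadjoint_on_S2 A"
  shows "\<exists>a b :: nat \<Rightarrow> 'h \<Rightarrow> 'h.
           (\<forall>n. selfadjoint_op (a n) \<and> selfadjoint_op (b n)) \<and>
           (\<forall>\<eta>\<in>S2. (\<lambda>N. hs_norm (\<lambda>x. (\<Sum>n<N. a n (\<eta> (b n x))) - A \<eta> x))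
                        \<longlonglongrightarrow> 0)"
proof (intro exI conjI allI ballI)
  show "selfadjoint_op (left_factor A n)" "selfadjoint_op (right_factor A n)" for n
    by (rule selfadjoint_op_factors)+
  fix \<eta> :: "'h \<Rightarrow> 'h"
  assume "\<eta> \<in> S2"
  show "(\<lambda>N. hs_norm (\<lambda>x. (\<Sum>n<N. left_factor A n (\<eta> (right_factor A n x))) - A \<eta> x)) \<longlonglongrightarrow> 0"
  proof (cases "(hs_basis :: 'h set) = {}")
    case True
    then show ?thesis
      by (simp add: hs_norm_trivial)
  next
    case False
    then show ?thesis
      unfolding sum_factors_eq_damped_sum by (rule damped_sum_tendsto[OF assms \<open>\<eta> \<in> S2\<close>])
  qed
qed

end
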